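(* Let $u\in\mathbb{C}$ with $\mathrm{Re}(u)>0$. Then \[ \sum_{m=1}^{\infty}\int_{0}^{\infty}\frac{t\cos(t)}{t^2+m^2u^2}\,\mathrm{d}t=\frac{1}{2}\left\{\log\left(\frac{u}{2\pi}\right)-\frac{1}{2}\left(\psi\left(\frac{iu}{2\pi}\right)+\psi\left(\frac{-iu}{2\pi}\right)\right)\right\}. \]
   Context: $\psi=\Gamma'/\Gamma$ is the digamma function and $\log$ is the principal branch of the logarithm. *)

theory Defs
  imports "HOL-Analysis.Analysis"
begin

definition improper_integral_converges :: "(real \<Rightarrow> complex) \<Rightarrow> bool" where
  "improper_integral_converges f \<longleftrightarrow>
     (\<forall>T\<ge>0. f integrable_on {0..T}) \<and>
     (\<exists>L. ((\<lambda>T. integral {0..T} f) \<longlongrightarrow> L) at_top)"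

definition improper_integral :: "(real \<Rightarrow> complex) \<Rightarrow> complex" where
  "improper_integral f = Lim at_top (\<lambda>T. integral {0..T} f)"

end

theory Submission
  imports Defs "HOL-Real_Asymp.Real_Asymp"
begin

(*
  Summing the integrands first, the partial fraction expansion of the digamma function and
  its reflection formula give, with \<omega> = 2 pi / u,
    S t = (\<Sum>m\<ge>1. t / (t^2 + m^2 u^2)) = \<omega>/4 + (\<omega>/2) / (exp (\<omega> t) - 1) - 1 / (2 t).
  Integrating cos t * t / (t^2 + a^2) by parts twice shows that every integral converges, with
  error terms that are uniform in T and O(1/m^2) in m. By Tannery's theorem the sum \<Phi> of the
  integrals is therefore the limit of the integral of cos t * (S t - \<omega>/4) over [0, T].
  Expanding (\<omega>/2) / (exp (\<omega> t) - 1) into a geometric sum with K terms, each term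
  exp (- n \<omega> t) integrates against cos t to n \<omega> / (1 + (n \<omega>)^2), the geometric remainder
  combined with - 1 / (2 t) gives the Frullani-type integral - log (1 + (K \<omega>)^2) / 4, and the
  rest is O(1/K). As K tends to infinity, these approximations converge to the digamma expression
  by the limit formula Digamma z = lim (ln m - (\<Sum>n<m. 1 / (z + n))).
*)

section \<open>Partial fractions of the digamma function\<close>

lemma Digamma_reflection_complex:
  fixes z :: complex
  assumes z: "z \<notin> \<int>"
  shows "Digamma (1 - z) - Digamma z = of_real pi * cot (of_real pi * z)"
proof -
  have sin_nz: "sin (of_real pi * z) \<noteq> 0"
  proof
    assume "sin (of_real pi * z) = 0"
    then obtain n :: int where "of_real pi * z = of_real (of_int n * pi)" by (auto simp: sin_eq_0)
    hence "z = of_int n" by (simp add: field_simps)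
    with z show False by auto
  qed
  have "z \<notin> \<int>\<^sub>\<le>\<^sub>0" "1 - z \<notin> \<int>\<^sub>\<le>\<^sub>0"
    using z nonpos_Ints_subset_Ints Ints_diff[OF Ints_1, of "1 - z"] by auto
  hence "((\<lambda>w. Gamma w * Gamma (1 - w)) has_field_derivative
      Gamma z * Gamma (1 - z) * (Digamma z - Digamma (1 - z))) (at z)"
    by (auto intro!: derivative_eq_intros simp: algebra_simps)
  hence "((\<lambda>w. of_real pi / sin (of_real pi * w)) has_field_derivative
      Gamma z * Gamma (1 - z) * (Digamma z - Digamma (1 - z))) (at z)"
    by (rule has_field_derivative_transform_within_open[where S = "- \<int>"])
       (use z Gamma_reflection_complex closed_Ints in \<open>auto simp: open_Compl\<close>)
  moreover have "((\<lambda>w. of_real pi / sin (of_real pi * w)) has_field_derivative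
      - (of_real pi * (cos (of_real pi * z) * of_real pi)) / (sin (of_real pi * z)) ^ 2) (at z)"
    using sin_nz by (auto intro!: derivative_eq_intros simp: power2_eq_square)
  ultimately have h: "of_real pi / sin (of_real pi * z) * (Digamma z - Digamma (1 - z))
      = - (of_real pi * (cos (of_real pi * z) * of_real pi)) / (sin (of_real pi * z)) ^ 2"
    using DERIV_unique Gamma_reflection_complex[of z] by metis
  have "Digamma z - Digamma (1 - z)
      = (of_real pi / sin (of_real pi * z) * (Digamma z - Digamma (1 - z))) * (sin (of_real pi * z) / of_real pi)"
    using sin_nz by (simp add: field_simps)
  also have "\<dots> = - (of_real pi * cos (of_real pi * z)) / sin (of_real pi * z)"
    unfolding h using sin_nz by (simp add: field_simps power2_eq_square)
  finally show ?thesis by (simp add: cot_def field_simps)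
qed

lemma cot_i_times:
  fixes y :: complex
  assumes "exp (2 * y) \<noteq> 1"
  shows "cot (\<i> * y) = (exp (2 * y) + 1) / (\<i> * (exp (2 * y) - 1))"
proof -
  have "exp (2 * y) = exp y * exp y" by (simp add: exp_add[symmetric])
  thus ?thesis
    using assms by (simp add: cot_def cos_i_times sin_i_times field_simps)
qed

lemma sums_Digamma_diff:
  fixes z w :: "'a :: {real_normed_field,banach}"
  assumes "z \<noteq> 0" "w \<noteq> 0"
  shows "(\<lambda>k. inverse (w + of_nat k) - inverse (z + of_nat k)) sums (Digamma z - Digamma w)"
  using sums_diff[OF summable_sums[OF summable_Digamma[OF assms(1)]]
                     summable_sums[OF summable_Digamma[OF assms(2)]]]
  by (simp add: Digamma_def)

lemma sums_Digamma_partial_fractions: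
  fixes u t :: complex
  assumes u: "u \<noteq> 0" and x: "Im (\<i> * t / u) \<noteq> 0"
  shows "(\<lambda>m. t / (t ^ 2 + of_nat (Suc m) ^ 2 * u ^ 2)) sums
           ((Digamma (1 + \<i> * t / u) - Digamma (1 - \<i> * t / u)) / (2 * \<i> * u))"
proof -
  define x where "x = \<i> * t / u"
  have nz: "1 + x + of_nat k \<noteq> 0" "1 - x + of_nat k \<noteq> 0" for k :: nat
    using x by (auto simp: x_def complex_eq_iff)
  have "t / (t ^ 2 + of_nat (Suc k) ^ 2 * u ^ 2)
      = (inverse (1 - x + of_nat k) - inverse (1 + x + of_nat k)) / (2 * \<i> * u)" for k
  proof -
    define P where "P = (1 - x + of_nat k) * (1 + x + of_nat k)"
    have "t / (t ^ 2 + of_nat (Suc k) ^ 2 * u ^ 2) = (t / u ^ 2) / P"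
      using u by (simp add: P_def x_def field_simps power2_eq_square)
    also have "t / u ^ 2 = 2 * x / (2 * \<i> * u)"
      using u by (simp add: x_def field_simps power2_eq_square)
    also have "(2 * x / (2 * \<i> * u)) / P = (2 * x / P) / (2 * \<i> * u)"
      by simp
    also have "2 * x / P = inverse (1 - x + of_nat k) - inverse (1 + x + of_nat k)"
      using nz[of k] by (simp add: P_def field_simps)
    finally show ?thesis .
  qed
  moreover have "(\<lambda>k. (inverse (1 - x + of_nat k) - inverse (1 + x + of_nat k)) / (2 * \<i> * u))
      sums ((Digamma (1 + x) - Digamma (1 - x)) / (2 * \<i> * u))"
    using nz[of 0] by (intro sums_divide sums_Digamma_diff) simp_all
  ultimately show ?thesis by (simp add: x_def)
qed

lemma Re_inverse_pos: "Re z > 0 \<Longrightarrow> Re (inverse z) > 0"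
  by (auto intro!: divide_pos_pos add_pos_nonneg)

lemma sums_coth_partial_fractions:
  fixes u :: complex and t :: real
  assumes u: "Re u > 0" and t: "t > 0"
  shows "(\<lambda>m. of_real t / (of_real t ^ 2 + of_nat (Suc m) ^ 2 * u ^ 2)) sums
           ((2 * of_real pi / u) / 4 + ((2 * of_real pi / u) / 2) / (exp ((2 * of_real pi / u) * of_real t) - 1)
              - 1 / (2 * of_real t))"
proof -
  define x where "x = \<i> * of_real t / u"
  define y where "y = of_real pi * of_real t / u"
  have u0: "u \<noteq> 0" using u by auto
  from Re_inverse_pos[OF u]
  have Im_x: "Im x > 0" and Re_y: "Re y > 0"
    using t by (simp_all add: x_def y_def divide_inverse)
  have x0: "x \<noteq> 0" and x_Int: "x \<notin> \<int>" using Im_x by (auto simp: complex_is_Int_iff)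
  have E1: "exp (2 * y) \<noteq> 1"
  proof
    assume "exp (2 * y) = 1"
    hence "exp (2 * Re y) = 1" using norm_exp_eq_Re[of "2 * y"] by simp
    with Re_y show False by simp
  qed
  have "Digamma (1 + x) - Digamma (1 - x) = 1 / x - of_real pi * cot (\<i> * y)"
    using Digamma_plus1[OF x0] Digamma_reflection_complex[OF x_Int]
    by (simp add: x_def y_def add.commute algebra_simps)
  hence "(Digamma (1 + x) - Digamma (1 - x)) / (2 * \<i> * u)
      = (1 / x - of_real pi * ((exp (2 * y) + 1) / (\<i> * (exp (2 * y) - 1)))) / (2 * \<i> * u)"
    by (simp add: cot_i_times[OF E1])
  also have "\<dots> = (2 * of_real pi / u) / 4 + ((2 * of_real pi / u) / 2) / (exp (2 * y) - 1) - 1 / (2 * of_real t)"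
    using u0 t E1 by (simp add: x_def field_simps)
  finally have "(Digamma (1 + x) - Digamma (1 - x)) / (2 * \<i> * u) = \<dots>" .
  moreover have "2 * y = (2 * of_real pi / u) * of_real t" by (simp add: y_def)
  ultimately show ?thesis
    using sums_Digamma_partial_fractions[OF u0, of "of_real t"] Im_x by (simp add: x_def)
qed

section \<open>The integrals of \<open>cos t * t / (t\<^sup>2 + a\<^sup>2)\<close>\<close>

text \<open>\<open>g1\<close> and \<open>g2\<close> are the first two derivatives of \<open>g0\<close>. Integrating \<open>cos t * g0 a t\<close> by
  parts twice leaves the boundary term \<open>ibp_boundary a\<close> and the absolutely convergent integral
  \<open>ibp_remainder a\<close>; for \<open>Re a > 0\<close> all bounds depend on \<open>a\<close> only through \<open>\<bar>a\<bar>\<close> and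
  \<open>Re a / \<bar>a\<bar>\<close>.\<close>

definition g0 :: "complex \<Rightarrow> real \<Rightarrow> complex" where
  "g0 a t = of_real t / (of_real t ^ 2 + a ^ 2)"

definition g1 :: "complex \<Rightarrow> real \<Rightarrow> complex" where
  "g1 a t = (a ^ 2 - of_real t ^ 2) / (of_real t ^ 2 + a ^ 2) ^ 2"

definition g2 :: "complex \<Rightarrow> real \<Rightarrow> complex" where
  "g2 a t = (2 * of_real t ^ 3 - 6 * a ^ 2 * of_real t) / (of_real t ^ 2 + a ^ 2) ^ 3"

definition ibp_boundary :: "complex \<Rightarrow> real \<Rightarrow> complex" where
  "ibp_boundary a t = of_real (sin t) * g0 a t + of_real (cos t) * g1 a t"

definition ibp_remainder :: "complex \<Rightarrow> real \<Rightarrow> complex" where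
  "ibp_remainder a T = integral {0..T} (\<lambda>t. of_real (cos t) * g2 a t)"

lemma norm_cos_times_le: "norm (of_real (cos t) * z) \<le> norm (z :: complex)"
  using abs_cos_le_one[of t] by (simp add: norm_mult mult_left_le_one_le)

lemma norm_sin_times_le: "norm (of_real (sin t) * z) \<le> norm (z :: complex)"
  using abs_sin_le_one[of t] by (simp add: norm_mult mult_left_le_one_le)

lemma Re_div_norm_pos: "Re a > 0 \<Longrightarrow> Re a / cmod a > 0"
  by (auto intro!: divide_pos_pos)

lemma Re_div_norm_le_1: "Re a / cmod a \<le> 1"
  using complex_Re_le_cmod[of a] by (cases "a = 0") (simp_all add: divide_le_eq_1)

lemma sq_plus_norm_sq_pos:
  assumes "Re a > 0"
  shows "0 < t ^ 2 + (cmod a) ^ 2"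
proof -
  have "a \<noteq> 0" using assms by auto
  thus ?thesis by (simp add: add_nonneg_pos)
qed

lemma norm_sq_plus_sq_ge:
  fixes a :: complex and t :: real
  assumes "Re a > 0"
  shows "(t ^ 2 + (cmod a) ^ 2) * (Re a / cmod a) \<le> cmod (of_real t ^ 2 + a ^ 2)"
proof -
  have "Re ((of_real t ^ 2 + a ^ 2) * cnj a) = t ^ 2 * Re a + Re a * (cmod a) ^ 2"
    using cmod_power2[of a] by (simp add: power2_eq_square algebra_simps)
  also have "\<dots> = (t ^ 2 + (cmod a) ^ 2) * Re a" by (simp add: algebra_simps)
  finally have "(t ^ 2 + (cmod a) ^ 2) * Re a \<le> cmod (of_real t ^ 2 + a ^ 2) * cmod a"
    using complex_Re_le_cmod[of "(of_real t ^ 2 + a ^ 2) * cnj a"] by (simp add: norm_mult)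
  moreover have "cmod a > 0" using assms by auto
  ultimately show ?thesis by (simp add: field_simps)
qed

lemma sq_plus_sq_nonzero:
  fixes a :: complex and t :: real
  assumes "Re a > 0"
  shows "of_real t ^ 2 + a ^ 2 \<noteq> 0"
proof -
  have "0 < (t ^ 2 + (cmod a) ^ 2) * (Re a / cmod a)"
    by (intro mult_pos_pos sq_plus_norm_sq_pos Re_div_norm_pos assms)
  with norm_sq_plus_sq_ge[OF assms, of t] show ?thesis by auto
qed

lemma norm_g0_le:
  assumes "Re a > 0" "t \<ge> 0"
  shows "cmod (g0 a t) \<le> t / ((t ^ 2 + (cmod a) ^ 2) * (Re a / cmod a))"
proof -
  have pos: "0 < (t ^ 2 + (cmod a) ^ 2) * (Re a / cmod a)"
    by (intro mult_pos_pos sq_plus_norm_sq_pos Re_div_norm_pos assms)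
  have "cmod (g0 a t) = t / cmod (of_real t ^ 2 + a ^ 2)"
    using assms by (simp add: g0_def norm_divide)
  also have "\<dots> \<le> t / ((t ^ 2 + (cmod a) ^ 2) * (Re a / cmod a))"
    by (rule frac_le) (use assms pos norm_sq_plus_sq_ge[OF assms(1), of t] in auto)
  finally show ?thesis .
qed

lemma norm_g1_le:
  assumes "Re a > 0"
  shows "cmod (g1 a t) \<le> 1 / ((t ^ 2 + (cmod a) ^ 2) * (Re a / cmod a) ^ 2)"
proof -
  define k where "k = Re a / cmod a"
  define D where "D = t ^ 2 + (cmod a) ^ 2"
  have k: "k > 0" and D: "D > 0"
    using assms Re_div_norm_pos[OF assms] sq_plus_norm_sq_pos[of a t] by (simp_all add: k_def D_def)
  have "cmod (a ^ 2 - of_real t ^ 2) \<le> D"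
    using norm_triangle_ineq4[of "a ^ 2" "of_real t ^ 2"] by (simp add: D_def norm_power)
  moreover have "D * k \<le> cmod (of_real t ^ 2 + a ^ 2)"
    using norm_sq_plus_sq_ge[OF assms, of t] by (simp add: D_def k_def)
  ultimately have "cmod (g1 a t) \<le> D / (D * k) ^ 2"
    using D k by (auto simp: g1_def norm_divide norm_power intro!: frac_le power_mono)
  also have "\<dots> = 1 / (D * k ^ 2)" using D k by (simp add: field_simps power2_eq_square)
  finally show ?thesis by (simp add: D_def k_def)
qed

lemma norm_g2_le:
  assumes "Re a > 0" "t \<ge> 0"
  shows "cmod (g2 a t) \<le> 3 / (Re a / cmod a) ^ 3 * (2 * t / (t ^ 2 + (cmod a) ^ 2) ^ 2)"
proof -
  define k where "k = Re a / cmod a"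
  define D where "D = t ^ 2 + (cmod a) ^ 2"
  have k: "k > 0" and D: "D > 0"
    using assms Re_div_norm_pos[OF assms(1)] sq_plus_norm_sq_pos[of a t] by (simp_all add: k_def D_def)
  have "cmod (2 * of_real t ^ 3 - 6 * a ^ 2 * of_real t) \<le> 2 * t ^ 3 + 6 * (cmod a) ^ 2 * t"
    using norm_triangle_ineq4[of "2 * of_real t ^ 3" "6 * a ^ 2 * of_real t"] assms(2)
    by (simp add: norm_mult norm_power)
  also have "\<dots> \<le> 6 * t * D"
    using assms(2) by (simp add: D_def algebra_simps power3_eq_cube power2_eq_square)
  finally have "cmod (2 * of_real t ^ 3 - 6 * a ^ 2 * of_real t) \<le> 6 * t * D" .
  moreover have "D * k \<le> cmod (of_real t ^ 2 + a ^ 2)"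
    using norm_sq_plus_sq_ge[OF assms(1), of t] by (simp add: D_def k_def)
  ultimately have "cmod (g2 a t) \<le> 6 * t * D / (D * k) ^ 3"
    using D k assms(2) by (auto simp: g2_def norm_divide norm_power intro!: frac_le power_mono)
  also have "\<dots> = 3 / k ^ 3 * (2 * t / D ^ 2)"
    using D k by (simp add: field_simps power3_eq_cube power2_eq_square)
  finally show ?thesis by (simp add: D_def k_def)
qed

lemma has_integral_t_div_sq_plus_sq_squared:
  fixes A T1 T2 :: real
  assumes "A \<noteq> 0" "T1 \<le> T2"
  shows "((\<lambda>t. 2 * t / (t ^ 2 + A ^ 2) ^ 2) has_integral 1 / (T1 ^ 2 + A ^ 2) - 1 / (T2 ^ 2 + A ^ 2)) {T1..T2}"
proof -
  have pos: "t ^ 2 + A ^ 2 > 0" for t using assms by (intro add_nonneg_pos) auto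
  have "((\<lambda>t. - 1 / (t ^ 2 + A ^ 2)) has_real_derivative 2 * t / (t ^ 2 + A ^ 2) ^ 2) (at t within {T1..T2})" for t
    using pos[of t] by (auto intro!: derivative_eq_intros simp: power2_eq_square)
  hence "((\<lambda>t. 2 * t / (t ^ 2 + A ^ 2) ^ 2) has_integral
      - 1 / (T2 ^ 2 + A ^ 2) - (- 1 / (T1 ^ 2 + A ^ 2))) {T1..T2}"
    by (intro fundamental_theorem_of_calculus[OF assms(2)])
       (simp add: has_real_derivative_iff_has_vector_derivative)
  thus ?thesis by simp
qed

lemma has_field_derivative_g0:
  fixes a z :: complex
  assumes "z ^ 2 + a ^ 2 \<noteq> 0"
  shows "((\<lambda>z. z / (z ^ 2 + a ^ 2)) has_field_derivative (a ^ 2 - z ^ 2) / (z ^ 2 + a ^ 2) ^ 2) (at z)"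
  using assms by (auto intro!: derivative_eq_intros simp: field_simps power2_eq_square)

lemma has_field_derivative_g1:
  fixes a z :: complex
  assumes nz: "z ^ 2 + a ^ 2 \<noteq> 0"
  shows "((\<lambda>z. (a ^ 2 - z ^ 2) / (z ^ 2 + a ^ 2) ^ 2) has_field_derivative
          (2 * z ^ 3 - 6 * a ^ 2 * z) / (z ^ 2 + a ^ 2) ^ 3) (at z)"
proof -
  define D where "D = z ^ 2 + a ^ 2"
  have D0: "D \<noteq> 0" using nz by (simp add: D_def)
  have "((\<lambda>z. (a ^ 2 - z ^ 2) / (z ^ 2 + a ^ 2) ^ 2) has_field_derivative
      (- (2 * z) * D ^ 2 - (a ^ 2 - z ^ 2) * (2 * D * (2 * z))) / (D ^ 2 * D ^ 2)) (at z)"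
    unfolding D_def using nz by (auto intro!: derivative_eq_intros)
  also have "(- (2 * z) * D ^ 2 - (a ^ 2 - z ^ 2) * (2 * D * (2 * z))) / (D ^ 2 * D ^ 2)
      = (- (2 * z) * D - (a ^ 2 - z ^ 2) * (4 * z)) / D ^ 3"
    using D0 by (simp add: field_simps power2_eq_square power3_eq_cube)
  also have "- (2 * z) * D - (a ^ 2 - z ^ 2) * (4 * z) = 2 * z ^ 3 - 6 * a ^ 2 * z"
    by (simp add: D_def algebra_simps power2_eq_square power3_eq_cube)
  finally show ?thesis by (simp add: D_def)
qed

lemma tendsto_at_top_of_tail_bound:
  fixes G :: "real \<Rightarrow> 'a::banach" and B :: "real \<Rightarrow> real"
  assumes diff: "\<And>T1 T2. 0 \<le> T1 \<Longrightarrow> T1 \<le> T2 \<Longrightarrow> norm (G T2 - G T1) \<le> B T1"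
    and B: "(B \<longlongrightarrow> 0) at_top"
  obtains L where "(G \<longlongrightarrow> L) at_top" "\<And>T. 0 \<le> T \<Longrightarrow> norm (G T - L) \<le> B T"
proof -
  have "Cauchy (\<lambda>n::nat. G (real n))"
  proof (rule metric_CauchyI)
    fix e :: real assume "e > 0"
    with B have "eventually (\<lambda>T. dist (B T) 0 < e) at_top" by (rule tendstoD)
    then obtain T0 where T0: "\<And>T. T \<ge> T0 \<Longrightarrow> \<bar>B T\<bar> < e"
      by (auto simp: dist_real_def eventually_at_top_linorder)
    obtain M :: nat where M: "real M \<ge> max T0 0" using real_arch_simple by blast
    have "dist (G (real m)) (G (real n)) < e" if "m \<ge> M" "n \<ge> M" "m \<le> n" for m n
      using diff[of "real m" "real n"] T0[of "real m"] M that
      by (simp add: dist_norm norm_minus_commute abs_less_iff)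
    hence "dist (G (real m)) (G (real n)) < e" if "m \<ge> M" "n \<ge> M" for m n
      using that by (metis dist_commute nle_le)
    thus "\<exists>M. \<forall>m\<ge>M. \<forall>n\<ge>M. dist (G (real m)) (G (real n)) < e" by blast
  qed
  then obtain L where L: "(\<lambda>n. G (real n)) \<longlonglongrightarrow> L" using Cauchy_convergent_iff convergent_def by blast
  have bnd: "norm (G T - L) \<le> B T" if T: "0 \<le> T" for T
  proof -
    have "eventually (\<lambda>n. norm (G (real n) - G T) \<le> B T) sequentially"
      using eventually_ge_at_top[of "nat \<lceil>T\<rceil>"]
    proof eventually_elim
      case (elim n)
      hence "T \<le> real n" by linarith
      thus ?case using diff[OF T] by blast
    qed
    from Lim_norm_ubound[OF _ tendsto_diff[OF L tendsto_const] this]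
    show ?thesis by (simp add: norm_minus_commute)
  qed
  have "((\<lambda>T. G T - L) \<longlongrightarrow> 0) at_top"
    by (rule Lim_null_comparison[OF _ B]) (use eventually_ge_at_top[of 0] bnd in \<open>blast intro: eventually_mono\<close>)
  hence "(G \<longlongrightarrow> L) at_top" by (simp add: LIM_zero_iff)
  thus ?thesis using that bnd by blast
qed

lemma continuous_on_cos_g0: "Re a > 0 \<Longrightarrow> continuous_on S (\<lambda>t. of_real (cos t) * g0 a t)"
  unfolding g0_def by (auto intro!: continuous_intros simp: sq_plus_sq_nonzero)

lemma continuous_on_cos_g2: "Re a > 0 \<Longrightarrow> continuous_on S (\<lambda>t. of_real (cos t) * g2 a t)"
  unfolding g2_def by (auto intro!: continuous_intros simp: sq_plus_sq_nonzero)

lemma has_integral_cos_g0_plus_g2: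
  fixes a :: complex and T :: real
  assumes a: "Re a > 0" and T: "T \<ge> 0"
  shows "((\<lambda>t. of_real (cos t) * (g0 a t + g2 a t)) has_integral ibp_boundary a T - ibp_boundary a 0) {0..T}"
proof -
  define Q where "Q z = sin z * (z / (z ^ 2 + a ^ 2)) + cos z * ((a ^ 2 - z ^ 2) / (z ^ 2 + a ^ 2) ^ 2)" for z
  define Q' where "Q' z = cos z * (z / (z ^ 2 + a ^ 2) + (2 * z ^ 3 - 6 * a ^ 2 * z) / (z ^ 2 + a ^ 2) ^ 3)" for z
  have "(Q has_field_derivative Q' z) (at z)" if z: "z ^ 2 + a ^ 2 \<noteq> 0" for z
  proof -
    have "(Q has_field_derivative
       (cos z * (z / (z ^ 2 + a ^ 2)) + (a ^ 2 - z ^ 2) / (z ^ 2 + a ^ 2) ^ 2 * sin z) +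
       (- sin z * ((a ^ 2 - z ^ 2) / (z ^ 2 + a ^ 2) ^ 2) + (2 * z ^ 3 - 6 * a ^ 2 * z) / (z ^ 2 + a ^ 2) ^ 3 * cos z)) (at z)"
      unfolding Q_def
      by (intro DERIV_add DERIV_mult DERIV_sin DERIV_cos has_field_derivative_g0[OF z] has_field_derivative_g1[OF z])
    moreover have "c * g + X * s + (- s * X + h * c) = c * (g + h)" for c g X s h :: complex
      by (simp add: algebra_simps)
    ultimately show ?thesis unfolding Q'_def by metis
  qed
  hence "((\<lambda>t. Q (of_real t)) has_vector_derivative Q' (of_real t)) (at t within {0..T})" for t
    using sq_plus_sq_nonzero[OF a] by (intro has_vector_derivative_real_field) auto
  from fundamental_theorem_of_calculus[OF T this]
  show ?thesis
    by (simp add: Q_def Q'_def ibp_boundary_def g0_def g1_def g2_def cos_of_real sin_of_real)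
qed

lemma norm_ibp_remainder_diff_le:
  assumes a: "Re a > 0" and T: "0 \<le> T1" "T1 \<le> T2"
  shows "norm (ibp_remainder a T2 - ibp_remainder a T1)
           \<le> 3 / (Re a / cmod a) ^ 3 * (1 / (T1 ^ 2 + (cmod a) ^ 2))"
proof -
  define C where "C = 3 / (Re a / cmod a) ^ 3"
  have C: "C > 0" using Re_div_norm_pos[OF a] by (simp add: C_def)
  have a0: "cmod a \<noteq> 0" using a by auto
  note major = has_integral_mult_right[OF has_integral_t_div_sq_plus_sq_squared[OF a0 T(2)], of C]
  have "ibp_remainder a T2 - ibp_remainder a T1 = integral {T1..T2} (\<lambda>t. of_real (cos t) * g2 a t)"
    using Henstock_Kurzweil_Integration.integral_combine[OF T
            integrable_continuous_interval[OF continuous_on_cos_g2[OF a]]]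
    by (simp add: ibp_remainder_def algebra_simps)
  also have "norm \<dots> \<le> integral {T1..T2} (\<lambda>t. C * (2 * t / (t ^ 2 + (cmod a) ^ 2) ^ 2))"
  proof (rule integral_norm_bound_integral)
    show "(\<lambda>t. of_real (cos t) * g2 a t) integrable_on {T1..T2}"
      by (rule integrable_continuous_interval[OF continuous_on_cos_g2[OF a]])
    show "(\<lambda>t. C * (2 * t / (t ^ 2 + (cmod a) ^ 2) ^ 2)) integrable_on {T1..T2}"
      using major by blast
    fix t assume "t \<in> {T1..T2}"
    hence "t \<ge> 0" using T by auto
    have "norm (of_real (cos t) * g2 a t) \<le> cmod (g2 a t)"
      by (rule norm_cos_times_le)
    also have "\<dots> \<le> C * (2 * t / (t ^ 2 + (cmod a) ^ 2) ^ 2)"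
      using norm_g2_le[OF a \<open>t \<ge> 0\<close>] by (simp add: C_def)
    finally show "norm (of_real (cos t) * g2 a t) \<le> C * (2 * t / (t ^ 2 + (cmod a) ^ 2) ^ 2)" .
  qed
  also have "\<dots> = C * (1 / (T1 ^ 2 + (cmod a) ^ 2) - 1 / (T2 ^ 2 + (cmod a) ^ 2))"
    by (rule integral_unique[OF major])
  also have "\<dots> \<le> C * (1 / (T1 ^ 2 + (cmod a) ^ 2))"
    using C sq_plus_norm_sq_pos[OF a, of T2] by (intro mult_left_mono) auto
  finally show ?thesis by (simp add: C_def)
qed

definition ibp_remainder_limit :: "complex \<Rightarrow> complex" where
  "ibp_remainder_limit a = Lim at_top (ibp_remainder a)"

lemma tendsto_inverse_sq_plus_const: "((\<lambda>T::real. 1 / (T ^ 2 + d)) \<longlongrightarrow> 0) at_top"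
  by real_asymp

lemma ibp_remainder_tendsto:
  assumes a: "Re a > 0"
  shows "(ibp_remainder a \<longlongrightarrow> ibp_remainder_limit a) at_top"
    and "T \<ge> 0 \<Longrightarrow> norm (ibp_remainder a T - ibp_remainder_limit a)
           \<le> 3 / (Re a / cmod a) ^ 3 * (1 / (T ^ 2 + (cmod a) ^ 2))"
proof -
  from tendsto_at_top_of_tail_bound[OF norm_ibp_remainder_diff_le[OF a]
         tendsto_mult_right_zero[OF tendsto_inverse_sq_plus_const]]
  obtain L where L: "(ibp_remainder a \<longlongrightarrow> L) at_top"
    "\<And>T. 0 \<le> T \<Longrightarrow> norm (ibp_remainder a T - L) \<le> 3 / (Re a / cmod a) ^ 3 * (1 / (T ^ 2 + (cmod a) ^ 2))"
    by blast
  moreover have "ibp_remainder_limit a = L"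
    unfolding ibp_remainder_limit_def using L(1) by (rule tendsto_Lim[rotated]) simp
  ultimately show "(ibp_remainder a \<longlongrightarrow> ibp_remainder_limit a) at_top"
    and "T \<ge> 0 \<Longrightarrow> norm (ibp_remainder a T - ibp_remainder_limit a)
           \<le> 3 / (Re a / cmod a) ^ 3 * (1 / (T ^ 2 + (cmod a) ^ 2))" by simp_all
qed

lemma ibp_boundary_tendsto_0:
  assumes a: "Re a > 0"
  shows "(ibp_boundary a \<longlongrightarrow> 0) at_top"
proof (rule Lim_null_comparison)
  define k where "k = Re a / cmod a"
  define A where "A = cmod a"
  show "eventually (\<lambda>T. norm (ibp_boundary a T) \<le> 1 / k * (T / (T ^ 2 + A ^ 2)) + 1 / k ^ 2 * (1 / (T ^ 2 + A ^ 2))) at_top"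
    using eventually_ge_at_top[of "0::real"]
  proof eventually_elim
    case (elim T)
    have "norm (ibp_boundary a T) \<le> cmod (g0 a T) + cmod (g1 a T)"
      unfolding ibp_boundary_def
      using norm_triangle_ineq[of "of_real (sin T) * g0 a T" "of_real (cos T) * g1 a T"]
            norm_sin_times_le[of T "g0 a T"] norm_cos_times_le[of T "g1 a T"]
      by linarith
    also have "\<dots> \<le> T / ((T ^ 2 + A ^ 2) * k) + 1 / ((T ^ 2 + A ^ 2) * k ^ 2)"
      using norm_g0_le[OF a elim] norm_g1_le[OF a, of T] by (intro add_mono) (simp_all add: k_def A_def)
    finally show ?case by (simp add: mult.commute)
  qed
  have "((\<lambda>T::real. T / (T ^ 2 + A ^ 2)) \<longlongrightarrow> 0) at_top" by real_asymp
  thus "((\<lambda>T. 1 / k * (T / (T ^ 2 + A ^ 2)) + 1 / k ^ 2 * (1 / (T ^ 2 + A ^ 2))) \<longlongrightarrow> 0) at_top"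
    by (rule tendsto_add_zero[OF tendsto_mult_right_zero tendsto_mult_right_zero[OF tendsto_inverse_sq_plus_const]])
qed

lemma integral_cos_g0:
  assumes a: "Re a > 0" and T: "T \<ge> 0"
  shows "integral {0..T} (\<lambda>t. of_real (cos t) * g0 a t) = ibp_boundary a T - 1 / a ^ 2 - ibp_remainder a T"
proof -
  have "((\<lambda>t. of_real (cos t) * g2 a t) has_integral ibp_remainder a T) {0..T}"
    unfolding ibp_remainder_def
    by (rule integrable_integral[OF integrable_continuous_interval[OF continuous_on_cos_g2[OF a]]])
  from has_integral_diff[OF has_integral_cos_g0_plus_g2[OF a T] this]
  have "((\<lambda>t. of_real (cos t) * g0 a t) has_integral ibp_boundary a T - ibp_boundary a 0 - ibp_remainder a T) {0..T}"
    by (simp add: algebra_simps)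
  moreover have "ibp_boundary a 0 = 1 / a ^ 2"
    using a by (auto simp: ibp_boundary_def g0_def g1_def power2_eq_square)
  ultimately show ?thesis by (simp add: integral_unique)
qed

lemma tendsto_integral_cos_g0:
  assumes a: "Re a > 0"
  shows "((\<lambda>T. integral {0..T} (\<lambda>t. of_real (cos t) * g0 a t)) \<longlongrightarrow> - 1 / a ^ 2 - ibp_remainder_limit a) at_top"
proof -
  have "((\<lambda>T. ibp_boundary a T - 1 / a ^ 2 - ibp_remainder a T) \<longlongrightarrow> 0 - 1 / a ^ 2 - ibp_remainder_limit a) at_top"
    by (intro tendsto_intros ibp_boundary_tendsto_0[OF a] ibp_remainder_tendsto(1)[OF a])
  moreover have "eventually (\<lambda>T. ibp_boundary a T - 1 / a ^ 2 - ibp_remainder a T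
      = integral {0..T} (\<lambda>t. of_real (cos t) * g0 a t)) at_top"
    using eventually_ge_at_top[of 0] by eventually_elim (simp add: integral_cos_g0[OF a])
  ultimately show ?thesis by (simp add: Lim_transform_eventually)
qed

lemma improper_integral_cos_g0:
  assumes a: "Re a > 0"
  shows "improper_integral_converges (\<lambda>t. of_real (cos t) * g0 a t)"
    and "improper_integral (\<lambda>t. of_real (cos t) * g0 a t) = - 1 / a ^ 2 - ibp_remainder_limit a"
  using tendsto_integral_cos_g0[OF a]
  unfolding improper_integral_converges_def improper_integral_def
  by (auto intro!: integrable_continuous_interval continuous_on_cos_g0 a tendsto_Lim)

lemma summable_inverse_Suc_sq: "summable (\<lambda>m::nat. 1 / (real (Suc m)) ^ 2)"
proof -
  have "summable (\<lambda>n::nat. inverse (real n ^ 2))" by (rule inverse_power_summable) simp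
  hence "summable (\<lambda>n::nat. inverse (real (Suc n) ^ 2))" by (subst summable_Suc_iff)
  thus ?thesis by (simp add: divide_inverse)
qed

lemma tendsto_suminf_zero_if_dominated:
  fixes f :: "nat \<Rightarrow> real \<Rightarrow> complex"
  assumes lim: "\<And>m. (f m \<longlongrightarrow> 0) at_top"
    and bnd: "\<And>m T. T \<ge> 0 \<Longrightarrow> norm (f m T) \<le> c * (1 / (real (Suc m)) ^ 2)"
  shows "((\<lambda>T. \<Sum>m. f m T) \<longlongrightarrow> 0) at_top"
proof -
  have "eventually (\<lambda>(m, T). norm (f m T) \<le> c * (1 / (real (Suc m)) ^ 2)) (at_top \<times>\<^sub>F at_top)"
    unfolding eventually_prod_filter
    by (rule exI[of _ "\<lambda>_. True"], rule exI[of _ "\<lambda>T. T \<ge> 0"]) (use bnd in \<open>auto simp del: of_nat_Suc\<close>)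
  from tannerys_theorem[OF lim this summable_mult[OF summable_inverse_Suc_sq]]
  show ?thesis by simp
qed

lemma summable_if_norm_le_inverse_Suc_sq:
  fixes f :: "nat \<Rightarrow> 'a::banach"
  assumes "\<And>m. norm (f m) \<le> c * (1 / (real (Suc m)) ^ 2)"
  shows "summable f"
  by (rule summable_norm_cancel, rule summable_comparison_test[OF _ summable_mult[OF summable_inverse_Suc_sq]])
     (use assms in \<open>auto simp del: of_nat_Suc\<close>)

lemma has_integral_cos:
  assumes "T \<ge> (0::real)"
  shows "((\<lambda>t. of_real (cos t) :: complex) has_integral of_real (sin T)) {0..T}"
proof -
  have "((\<lambda>t. sin (of_real t :: complex)) has_vector_derivative cos (of_real t)) (at t within {0..T})" for t
    by (rule has_vector_derivative_real_field) (rule DERIV_sin)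
  from fundamental_theorem_of_calculus[OF assms this]
  show ?thesis by (simp add: sin_of_real cos_of_real)
qed

definition cos_exp_primitive :: "complex \<Rightarrow> real \<Rightarrow> complex" where
  "cos_exp_primitive c t = exp (- (c * of_real t)) * (of_real (sin t) - c * of_real (cos t)) / (1 + c ^ 2)"

lemma has_integral_cos_exp:
  fixes c :: complex and T :: real
  assumes c: "1 + c ^ 2 \<noteq> 0" and T: "T \<ge> 0"
  shows "((\<lambda>t. of_real (cos t) * exp (- (c * of_real t))) has_integral
           cos_exp_primitive c T - cos_exp_primitive c 0) {0..T}"
proof -
  define Q where "Q z = exp (- (c * z)) * (sin z - c * cos z) / (1 + c ^ 2)" for z
  have "(Q has_field_derivative exp (- (c * z)) * cos z) (at z)" for z
  proof -
    have "(Q has_field_derivative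
        ((- c * exp (- (c * z))) * (sin z - c * cos z) + exp (- (c * z)) * (cos z + c * sin z)) / (1 + c ^ 2)) (at z)"
      unfolding Q_def using c by (auto intro!: derivative_eq_intros)
    also have "((- c * exp (- (c * z))) * (sin z - c * cos z) + exp (- (c * z)) * (cos z + c * sin z)) / (1 + c ^ 2)
        = exp (- (c * z)) * cos z"
      using c by (simp add: field_simps power2_eq_square)
    finally show ?thesis .
  qed
  hence "((\<lambda>t. Q (of_real t)) has_vector_derivative exp (- (c * of_real t)) * cos (of_real t)) (at t within {0..T})" for t
    by (rule has_vector_derivative_real_field)
  from fundamental_theorem_of_calculus[OF T this]
  show ?thesis
    by (simp add: Q_def cos_exp_primitive_def sin_of_real cos_of_real mult.commute)
qed

lemma norm_sin_minus_times_cos_le: "cmod (of_real (sin t) - c * of_real (cos t)) \<le> 1 + cmod c"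
proof -
  have "cmod (of_real (sin t) - c * of_real (cos t)) \<le> \<bar>sin t\<bar> + cmod c * \<bar>cos t\<bar>"
    using norm_triangle_ineq4[of "of_real (sin t)" "c * of_real (cos t)"] by (simp add: norm_mult)
  also have "\<dots> \<le> 1 + cmod c * 1" by (intro add_mono mult_left_mono) auto
  finally show ?thesis by simp
qed

lemma norm_cos_exp_primitive:
  "cmod (cos_exp_primitive c t) = exp (- (Re c * t)) * cmod (of_real (sin t) - c * of_real (cos t)) / cmod (1 + c ^ 2)"
  by (simp add: cos_exp_primitive_def norm_divide norm_mult norm_exp_eq_Re)

lemma cos_exp_primitive_tendsto_0:
  assumes c: "Re c > 0"
  shows "(cos_exp_primitive c \<longlongrightarrow> 0) at_top"
proof (rule Lim_null_comparison)
  show "((\<lambda>t. exp (- (Re c * t)) * ((1 + cmod c) / cmod (1 + c ^ 2))) \<longlongrightarrow> 0) at_top"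
    using c by real_asymp
  show "eventually (\<lambda>t. norm (cos_exp_primitive c t) \<le> exp (- (Re c * t)) * ((1 + cmod c) / cmod (1 + c ^ 2))) at_top"
    unfolding norm_cos_exp_primitive
    by (intro always_eventually allI) (simp add: mult_left_mono divide_right_mono norm_sin_minus_times_cos_le)
qed

lemma integral_exp_neg_le:
  fixes r T :: real
  assumes r: "r > 0" and T: "T \<ge> 0"
  shows "integral {0..T} (\<lambda>t. exp (- (r * t))) \<le> 1 / r"
proof -
  have "((\<lambda>t. - exp (- (r * t)) / r) has_real_derivative exp (- (r * t))) (at t within {0..T})" for t
    using r by (auto intro!: derivative_eq_intros)
  hence "((\<lambda>t. exp (- (r * t))) has_integral (- exp (- (r * T)) / r - (- exp (- (r * 0)) / r))) {0..T}"
    using T by (intro fundamental_theorem_of_calculus) (auto simp: has_real_derivative_iff_has_vector_derivative)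
  hence "integral {0..T} (\<lambda>t. exp (- (r * t))) = (1 - exp (- (r * T))) / r"
    by (simp add: integral_unique diff_divide_distrib add.commute)
  also have "\<dots> \<le> 1 / r" using r by (intro divide_right_mono) auto
  finally show ?thesis .
qed

text \<open>For \<open>t \<noteq> 0\<close> this is \<open>(1 - exp (- \<alpha> t)) / t\<close>; the integral form makes it continuous at
  \<open>t = 0\<close> and lets us swap the order of integration.\<close>

definition one_minus_exp_quot :: "complex \<Rightarrow> real \<Rightarrow> complex" where
  "one_minus_exp_quot \<alpha> t = integral {0..1} (\<lambda>l. \<alpha> * exp (- (of_real l * \<alpha> * of_real t)))"

lemma one_minus_exp_quot_0: "one_minus_exp_quot \<alpha> 0 = \<alpha>"
  by (simp add: one_minus_exp_quot_def)

lemma one_minus_exp_quot_eq: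
  assumes t: "t \<noteq> 0"
  shows "one_minus_exp_quot \<alpha> t = (1 - exp (- (\<alpha> * of_real t))) / of_real t"
proof -
  define F where "F z = - exp (- (z * \<alpha> * of_real t)) / of_real t" for z :: complex
  have "(F has_field_derivative \<alpha> * exp (- (z * \<alpha> * of_real t))) (at z)" for z
    unfolding F_def using t by (auto intro!: derivative_eq_intros simp: field_simps)
  hence "((\<lambda>l. F (of_real l)) has_vector_derivative \<alpha> * exp (- (of_real l * \<alpha> * of_real t))) (at l within {0..1})" for l
    by (rule has_vector_derivative_real_field)
  hence "((\<lambda>l. \<alpha> * exp (- (of_real l * \<alpha> * of_real t))) has_integral F (of_real 1) - F (of_real 0)) {0..1}"
    by (intro fundamental_theorem_of_calculus) simp_all
  hence "one_minus_exp_quot \<alpha> t = F 1 - F 0"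
    unfolding one_minus_exp_quot_def by (simp only: of_real_1 of_real_0 integral_unique)
  also have "\<dots> = (1 - exp (- (\<alpha> * of_real t))) / of_real t"
    using t by (simp add: F_def field_simps)
  finally show ?thesis .
qed

lemma continuous_on_one_minus_exp_quot: "continuous_on S (one_minus_exp_quot \<alpha>)"
proof -
  have "continuous_on (S \<times> cbox 0 1) (\<lambda>(t, l). \<alpha> * exp (- (of_real l * \<alpha> * of_real t)))"
    by (auto intro!: continuous_intros simp: case_prod_unfold)
  from integral_continuous_on_param[OF this]
  show ?thesis unfolding one_minus_exp_quot_def cbox_interval[symmetric] by (simp add: case_prod_unfold)
qed

lemma one_plus_sq_not_nonpos:
  fixes \<alpha> :: complex and l :: real
  assumes a: "Re \<alpha> > 0"
  shows "1 + (of_real l * \<alpha>) ^ 2 \<notin> \<real>\<^sub>\<le>\<^sub>0"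
proof
  assume "1 + (of_real l * \<alpha>) ^ 2 \<in> \<real>\<^sub>\<le>\<^sub>0"
  hence im: "2 * (l * l) * Re \<alpha> * Im \<alpha> = 0" and re: "1 + (l * l) * (Re \<alpha> * Re \<alpha> - Im \<alpha> * Im \<alpha>) \<le> 0"
    by (auto simp: complex_nonpos_Reals_iff power2_eq_square algebra_simps)
  from im a have "l * l = 0 \<or> Im \<alpha> = 0" by simp
  thus False
  proof
    assume "Im \<alpha> = 0"
    with re have "1 + (l * l) * (Re \<alpha> * Re \<alpha>) \<le> 0" by simp
    moreover have "(l * l) * (Re \<alpha> * Re \<alpha>) \<ge> 0" by simp
    ultimately show False by linarith
  qed (use re in simp)
qed

lemma one_plus_sq_nonzero: "Re \<alpha> > 0 \<Longrightarrow> 1 + (of_real l * \<alpha>) ^ 2 \<noteq> 0"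
  using one_plus_sq_not_nonpos[of \<alpha> l] by auto

lemma has_integral_Ln_one_plus_sq:
  fixes \<alpha> :: complex
  assumes a: "Re \<alpha> > 0"
  shows "((\<lambda>l. of_real l * \<alpha> ^ 2 / (1 + (of_real l * \<alpha>) ^ 2)) has_integral Ln (1 + \<alpha> ^ 2) / 2) {0..1}"
proof -
  define G where "G z = Ln (1 + (z * \<alpha>) ^ 2) / 2" for z :: complex
  have "(G has_field_derivative of_real l * \<alpha> ^ 2 / (1 + (of_real l * \<alpha>) ^ 2)) (at (of_real l))" for l :: real
  proof -
    have "((\<lambda>z. 1 + (z * \<alpha>) ^ 2) has_field_derivative 2 * (of_real l * \<alpha>) * \<alpha>) (at (of_real l))"
      by (auto intro!: derivative_eq_intros)
    from DERIV_chain2[OF has_field_derivative_Ln[OF one_plus_sq_not_nonpos[OF a, of l]] this]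
    have "(G has_field_derivative inverse (1 + (of_real l * \<alpha>) ^ 2) * (2 * (of_real l * \<alpha>) * \<alpha>) / 2) (at (of_real l))"
      unfolding G_def by (rule DERIV_cdivide)
    moreover have "inverse D * (2 * (x * a) * a) / 2 = x * a ^ 2 / D" if "D \<noteq> 0" for D x a :: complex
      using that by (simp add: field_simps power2_eq_square)
    ultimately show ?thesis
      using one_plus_sq_nonzero[OF a, of l] by metis
  qed
  hence "((\<lambda>l. G (of_real l)) has_vector_derivative of_real l * \<alpha> ^ 2 / (1 + (of_real l * \<alpha>) ^ 2)) (at l within {0..1})" for l
    by (rule has_vector_derivative_real_field)
  from fundamental_theorem_of_calculus[OF _ this]
  show ?thesis by (simp add: G_def)
qed

lemma integral_cos_one_minus_exp_quot:
  fixes \<alpha> :: complex and T :: real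
  assumes a: "Re \<alpha> > 0" and T: "T \<ge> 0"
  shows "integral {0..T} (\<lambda>t. of_real (cos t) * one_minus_exp_quot \<alpha> t) =
         integral {0..1} (\<lambda>l. \<alpha> * (cos_exp_primitive (of_real l * \<alpha>) T - cos_exp_primitive (of_real l * \<alpha>) 0))"
proof -
  define f where "f t l = of_real (cos t) * (\<alpha> * exp (- (of_real l * \<alpha> * of_real t)))" for t l :: real
  have "continuous_on (cbox (0, 0) (T, 1)) (\<lambda>(t, l). f t l)"
    unfolding f_def by (auto intro!: continuous_intros simp: case_prod_unfold)
  from integral_swap_continuous[OF this]
  have "integral {0..T} (\<lambda>t. of_real (cos t) * one_minus_exp_quot \<alpha> t) = integral {0..1} (\<lambda>l. integral {0..T} (\<lambda>t. f t l))"
    unfolding one_minus_exp_quot_def f_def cbox_interval by simp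
  also have "\<dots> = integral {0..1} (\<lambda>l. \<alpha> * (cos_exp_primitive (of_real l * \<alpha>) T - cos_exp_primitive (of_real l * \<alpha>) 0))"
  proof (rule integral_cong)
    fix l :: real
    have "integral {0..T} (\<lambda>t. f t l) = \<alpha> * integral {0..T} (\<lambda>t. of_real (cos t) * exp (- ((of_real l * \<alpha>) * of_real t)))"
      unfolding f_def by (simp add: algebra_simps)
    thus "integral {0..T} (\<lambda>t. f t l) = \<alpha> * (cos_exp_primitive (of_real l * \<alpha>) T - cos_exp_primitive (of_real l * \<alpha>) 0)"
      by (simp add: integral_unique[OF has_integral_cos_exp[OF one_plus_sq_nonzero[OF a] T]])
  qed
  finally show ?thesis .
qed

lemma norm_one_plus_sq_ge:
  fixes \<alpha> :: complex and l :: real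
  assumes a: "Re \<alpha> > 0" and l: "l \<ge> 0"
  shows "Re \<alpha> / cmod \<alpha> \<le> cmod (1 + (of_real l * \<alpha>) ^ 2)"
proof (cases "l = 0")
  case True
  thus ?thesis using Re_div_norm_le_1[of \<alpha>] by simp
next
  case False
  hence "Re (of_real l * \<alpha>) > 0" and k: "Re (of_real l * \<alpha>) / cmod (of_real l * \<alpha>) = Re \<alpha> / cmod \<alpha>"
    using l a by (simp_all add: norm_mult)
  from norm_sq_plus_sq_ge[OF this(1), of 1]
  have "(1 + (cmod (of_real l * \<alpha>)) ^ 2) * (Re \<alpha> / cmod \<alpha>) \<le> cmod (1 + (of_real l * \<alpha>) ^ 2)"
    unfolding k by simp
  moreover have "Re \<alpha> / cmod \<alpha> \<le> (1 + (cmod (of_real l * \<alpha>)) ^ 2) * (Re \<alpha> / cmod \<alpha>)"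
    using Re_div_norm_pos[OF a] by (intro mult_le_cancel_right1[THEN iffD2] impI) auto
  ultimately show ?thesis by linarith
qed

lemma norm_integral_cos_exp_primitive_le:
  fixes \<alpha> :: complex
  assumes a: "Re \<alpha> > 0" and T: "T > 0"
  shows "norm (integral {0..1} (\<lambda>l. \<alpha> * cos_exp_primitive (of_real l * \<alpha>) T))
           \<le> cmod \<alpha> * (1 + cmod \<alpha>) / (Re \<alpha> / cmod \<alpha>) / (Re \<alpha> * T)"
proof -
  define C where "C = cmod \<alpha> * (1 + cmod \<alpha>) / (Re \<alpha> / cmod \<alpha>)"
  have C: "C \<ge> 0" using a by (simp add: C_def)
  have "norm (integral {0..1} (\<lambda>l. \<alpha> * cos_exp_primitive (of_real l * \<alpha>) T))
      \<le> integral {0..1} (\<lambda>l. C * exp (- ((Re \<alpha> * T) * l)))"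
  proof (rule integral_norm_bound_integral)
    show "(\<lambda>l. \<alpha> * cos_exp_primitive (of_real l * \<alpha>) T) integrable_on {0..1}"
      unfolding cos_exp_primitive_def
      by (intro integrable_continuous_interval) (auto intro!: continuous_intros simp: one_plus_sq_nonzero[OF a])
    show "(\<lambda>l. C * exp (- ((Re \<alpha> * T) * l))) integrable_on {0..1}"
      by (intro integrable_continuous_interval continuous_intros)
    fix l :: real assume l: "l \<in> {0..1}"
    have "cmod (of_real (sin T) - (of_real l * \<alpha>) * of_real (cos T)) \<le> 1 + cmod (of_real l * \<alpha>)"
      by (rule norm_sin_minus_times_cos_le)
    also have "\<dots> \<le> 1 + cmod \<alpha>" using l by (simp add: norm_mult mult_left_le_one_le)
    finally have "exp (- ((Re \<alpha> * T) * l)) * cmod (of_real (sin T) - (of_real l * \<alpha>) * of_real (cos T))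
        / cmod (1 + (of_real l * \<alpha>) ^ 2) \<le> exp (- ((Re \<alpha> * T) * l)) * (1 + cmod \<alpha>) / (Re \<alpha> / cmod \<alpha>)"
      using norm_one_plus_sq_ge[OF a, of l] Re_div_norm_pos[OF a] l
      by (intro frac_le mult_left_mono) auto
    from mult_left_mono[OF this norm_ge_zero[of \<alpha>]]
    have "cmod \<alpha> * (exp (- ((Re \<alpha> * T) * l)) * cmod (of_real (sin T) - (of_real l * \<alpha>) * of_real (cos T))
        / cmod (1 + (of_real l * \<alpha>) ^ 2)) \<le> C * exp (- ((Re \<alpha> * T) * l))"
      by (simp add: C_def mult_ac)
    thus "norm (\<alpha> * cos_exp_primitive (of_real l * \<alpha>) T) \<le> C * exp (- ((Re \<alpha> * T) * l))"
      by (simp add: norm_mult norm_cos_exp_primitive mult_ac)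
  qed
  also have "\<dots> = C * integral {0..1} (\<lambda>l. exp (- ((Re \<alpha> * T) * l)))" by simp
  also have "\<dots> \<le> C * (1 / (Re \<alpha> * T))"
    using integral_exp_neg_le[of "Re \<alpha> * T" 1] a T C by (intro mult_left_mono) auto
  finally show ?thesis by (simp add: C_def)
qed

text \<open>A Frullani-type integral, evaluated by swapping the two integrations.\<close>

lemma tendsto_integral_cos_one_minus_exp_quot:
  fixes \<alpha> :: complex
  assumes a: "Re \<alpha> > 0"
  shows "((\<lambda>T. integral {0..T} (\<lambda>t. of_real (cos t) * one_minus_exp_quot \<alpha> t)) \<longlongrightarrow> Ln (1 + \<alpha> ^ 2) / 2) at_top"
proof -
  define R where "R T = integral {0..1} (\<lambda>l. \<alpha> * cos_exp_primitive (of_real l * \<alpha>) T)" for T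
  define C where "C = cmod \<alpha> * (1 + cmod \<alpha>) / (Re \<alpha> / cmod \<alpha>)"
  have eq: "integral {0..T} (\<lambda>t. of_real (cos t) * one_minus_exp_quot \<alpha> t) = R T + Ln (1 + \<alpha> ^ 2) / 2"
    if T: "T \<ge> 0" for T
  proof -
    have "((\<lambda>l. \<alpha> * cos_exp_primitive (of_real l * \<alpha>) T) has_integral R T) {0..1}"
      unfolding R_def cos_exp_primitive_def
      by (intro integrable_integral integrable_continuous_interval)
         (auto intro!: continuous_intros simp: one_plus_sq_nonzero[OF a])
    from has_integral_add[OF this has_integral_Ln_one_plus_sq[OF a]]
    have "((\<lambda>l. \<alpha> * (cos_exp_primitive (of_real l * \<alpha>) T - cos_exp_primitive (of_real l * \<alpha>) 0))
        has_integral R T + Ln (1 + \<alpha> ^ 2) / 2) {0..1}"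
      by (simp add: cos_exp_primitive_def algebra_simps power2_eq_square)
    thus ?thesis unfolding integral_cos_one_minus_exp_quot[OF a T] by (rule integral_unique)
  qed
  have "(R \<longlongrightarrow> 0) at_top"
  proof (rule Lim_null_comparison)
    show "eventually (\<lambda>T. norm (R T) \<le> C / (Re \<alpha> * T)) at_top"
      using eventually_gt_at_top[of 0]
      by eventually_elim (use norm_integral_cos_exp_primitive_le[OF a] in \<open>simp add: R_def C_def\<close>)
    show "((\<lambda>T. C / (Re \<alpha> * T)) \<longlongrightarrow> 0) at_top"
      using a by real_asymp
  qed
  hence "((\<lambda>T. R T + Ln (1 + \<alpha> ^ 2) / 2) \<longlongrightarrow> 0 + Ln (1 + \<alpha> ^ 2) / 2) at_top"
    by (intro tendsto_add tendsto_const)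
  moreover have "eventually (\<lambda>T. R T + Ln (1 + \<alpha> ^ 2) / 2
      = integral {0..T} (\<lambda>t. of_real (cos t) * one_minus_exp_quot \<alpha> t)) at_top"
    using eventually_ge_at_top[of 0] by eventually_elim (simp add: eq)
  ultimately show ?thesis by (simp add: Lim_transform_eventually)
qed

lemma sum_exp_neg_geometric:
  fixes z :: complex
  assumes z: "exp z \<noteq> 1"
  shows "(\<Sum>n=1..K. exp (- (of_nat n * z))) = (1 - exp (- (of_nat K * z))) / (exp z - 1)"
proof (induction K)
  case (Suc K)
  have "- (of_nat (Suc K) * z) = - (of_nat K * z) - z"
    by (simp add: algebra_simps)
  hence e: "exp (- (of_nat (Suc K) * z)) = exp (- (of_nat K * z)) / exp z"
    by (simp add: exp_diff)
  have "exp z - 1 \<noteq> 0" using z by simp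
  have "(\<Sum>n=1..Suc K. exp (- (of_nat n * z))) = (\<Sum>n=1..K. exp (- (of_nat n * z))) + exp (- (of_nat (Suc K) * z))"
    by simp
  also have "\<dots> = (1 - exp (- (of_nat K * z))) / (exp z - 1) + exp (- (of_nat K * z)) / exp z"
    unfolding Suc e ..
  also have "\<dots> = (1 - exp (- (of_nat K * z)) / exp z) / (exp z - 1)"
    using \<open>exp z - 1 \<noteq> 0\<close> by (simp add: field_simps)
  finally show ?case unfolding e .
qed simp

definition Digamma_approx :: "complex \<Rightarrow> nat \<Rightarrow> complex" where
  "Digamma_approx z m = of_real (ln (real m)) - (\<Sum>n<m. inverse (z + of_nat n))"

lemma sq_not_nonpos_Reals:
  fixes z :: complex
  assumes "Re z > 0"
  shows "z ^ 2 \<notin> \<real>\<^sub>\<le>\<^sub>0"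
proof
  assume "z ^ 2 \<in> \<real>\<^sub>\<le>\<^sub>0"
  hence "2 * Re z * Im z = 0" and re: "Re z * Re z - Im z * Im z \<le> 0"
    by (auto simp: complex_nonpos_Reals_iff power2_eq_square)
  hence "Im z = 0" using assms by simp
  with re have "Re z * Re z \<le> 0" by simp
  with mult_pos_pos[OF assms assms] show False by linarith
qed

lemma Digamma_approx_LIMSEQ: "z \<noteq> 0 \<Longrightarrow> Digamma_approx z \<longlonglongrightarrow> Digamma z"
  unfolding Digamma_approx_def[abs_def] by (rule Digamma_LIMSEQ)

section \<open>Summing the integrals\<close>

text \<open>\<open>F m\<close> is the value of the integral with \<open>a = \<mu> m = (m + 1) u\<close>
  (lemma \<open>improper_integral_cos_g0\<close>), and \<open>S\<close> is the sum of the integrands without the cosine.\<close>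

locale cos_kernel_sum =
  fixes u :: complex
  assumes Re_u_pos: "Re u > 0"
begin

definition \<mu> :: "nat \<Rightarrow> complex" where
  "\<mu> m = of_nat (Suc m) * u"

definition \<kappa> :: real where
  "\<kappa> = Re u / cmod u"

definition \<omega> :: complex where
  "\<omega> = 2 * of_real pi / u"

definition S :: "real \<Rightarrow> complex" where
  "S t = (\<Sum>m. g0 (\<mu> m) t)"

definition F :: "nat \<Rightarrow> complex" where
  "F m = - 1 / (\<mu> m) ^ 2 - ibp_remainder_limit (\<mu> m)"

definition \<Phi> :: complex where
  "\<Phi> = suminf F"

lemma u_nonzero: "u \<noteq> 0"
  using Re_u_pos by auto

lemma \<kappa>_pos: "\<kappa> > 0"
  unfolding \<kappa>_def by (rule Re_div_norm_pos[OF Re_u_pos])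

lemma Re_\<mu>_pos: "Re (\<mu> m) > 0"
  using Re_u_pos by (simp add: \<mu>_def)

lemma norm_\<mu>: "cmod (\<mu> m) = real (Suc m) * cmod u"
  unfolding \<mu>_def norm_mult norm_of_nat ..

lemma Re_div_norm_\<mu>: "Re (\<mu> m) / cmod (\<mu> m) = \<kappa>"
  by (simp add: \<mu>_def \<kappa>_def norm_mult del: of_nat_Suc)

lemma g0_\<mu>: "g0 (\<mu> m) t = of_real t / (of_real t ^ 2 + of_nat (Suc m) ^ 2 * u ^ 2)"
  by (simp add: g0_def \<mu>_def power_mult_distrib)

lemma Re_\<omega>_pos: "Re \<omega> > 0"
  using Re_inverse_pos[OF Re_u_pos] by (simp add: \<omega>_def divide_inverse)

lemma inverse_sq_plus_norm_\<mu>_le: "1 / (T ^ 2 + (cmod (\<mu> m)) ^ 2) \<le> 1 / (cmod u) ^ 2 * (1 / (real (Suc m)) ^ 2)"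
proof -
  have pos: "0 < (real (Suc m)) ^ 2 * (cmod u) ^ 2"
    using u_nonzero by (simp del: of_nat_Suc)
  have "(real (Suc m)) ^ 2 * (cmod u) ^ 2 \<le> T ^ 2 + (cmod (\<mu> m)) ^ 2"
    by (simp add: norm_\<mu> power_mult_distrib del: of_nat_Suc)
  hence "1 / (T ^ 2 + (cmod (\<mu> m)) ^ 2) \<le> 1 / ((real (Suc m)) ^ 2 * (cmod u) ^ 2)"
    using pos by (intro divide_left_mono) auto
  thus ?thesis by (simp add: mult.commute)
qed

lemma norm_g0_\<mu>_le:
  assumes "t \<ge> 0"
  shows "cmod (g0 (\<mu> m) t) \<le> t / (\<kappa> * (cmod u) ^ 2) * (1 / (real (Suc m)) ^ 2)"
proof -
  have "cmod (g0 (\<mu> m) t) \<le> t / \<kappa> * (1 / (t ^ 2 + (cmod (\<mu> m)) ^ 2))"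
    using norm_g0_le[OF Re_\<mu>_pos assms] by (simp add: Re_div_norm_\<mu> mult.commute)
  also have "\<dots> \<le> t / \<kappa> * (1 / (cmod u) ^ 2 * (1 / (real (Suc m)) ^ 2))"
    using assms \<kappa>_pos by (intro mult_left_mono inverse_sq_plus_norm_\<mu>_le) auto
  finally show ?thesis by simp
qed

lemma summable_g0_\<mu>:
  assumes "t \<ge> 0"
  shows "summable (\<lambda>m. cmod (g0 (\<mu> m) t))" and "summable (\<lambda>m. g0 (\<mu> m) t)"
proof -
  show "summable (\<lambda>m. cmod (g0 (\<mu> m) t))"
    by (rule summable_comparison_test[OF _ summable_mult[OF summable_inverse_Suc_sq, of "t / (\<kappa> * (cmod u) ^ 2)"]])
       (use norm_g0_\<mu>_le[OF assms] in \<open>auto simp del: of_nat_Suc\<close>)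
  thus "summable (\<lambda>m. g0 (\<mu> m) t)" by (rule summable_norm_cancel)
qed

lemma sums_S: "t \<ge> 0 \<Longrightarrow> (\<lambda>m. g0 (\<mu> m) t) sums S t"
  unfolding S_def by (rule summable_sums[OF summable_g0_\<mu>(2)])

lemma norm_S_le:
  assumes "t \<ge> 0"
  shows "cmod (S t) \<le> t / (\<kappa> * (cmod u) ^ 2) * (\<Sum>m. 1 / (real (Suc m)) ^ 2)"
proof -
  have "cmod (S t) \<le> (\<Sum>m. cmod (g0 (\<mu> m) t))"
    unfolding S_def by (rule summable_norm[OF summable_g0_\<mu>(1)[OF assms]])
  also have "\<dots> \<le> (\<Sum>m. t / (\<kappa> * (cmod u) ^ 2) * (1 / (real (Suc m)) ^ 2))"
    using norm_g0_\<mu>_le[OF assms]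
    by (intro suminf_le summable_g0_\<mu>(1)[OF assms] summable_mult[OF summable_inverse_Suc_sq]) auto
  also have "\<dots> = t / (\<kappa> * (cmod u) ^ 2) * (\<Sum>m. 1 / (real (Suc m)) ^ 2)"
    by (rule suminf_mult[OF summable_inverse_Suc_sq])
  finally show ?thesis .
qed

text \<open>On \<open>[0, T]\<close> the partial sums of \<open>S\<close> are uniformly bounded, so summation and integration
  commute by dominated convergence.\<close>

lemma integral_cos_S:
  assumes T: "T \<ge> 0"
  shows "(\<lambda>t. of_real (cos t) * S t) integrable_on {0..T}"
    and "(\<lambda>m. integral {0..T} (\<lambda>t. of_real (cos t) * g0 (\<mu> m) t)) sums integral {0..T} (\<lambda>t. of_real (cos t) * S t)"
proof -
  define C where "C = T / (\<kappa> * (cmod u) ^ 2) * (\<Sum>m. 1 / (real (Suc m)) ^ 2)"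
  define f where "f k t = (\<Sum>m<k. of_real (cos t) * g0 (\<mu> m) t)" for k t
  have cont: "continuous_on {0..T} (\<lambda>t. of_real (cos t) * g0 (\<mu> m) t)" for m
    by (rule continuous_on_cos_g0[OF Re_\<mu>_pos])
  have le: "norm (f k t) \<le> C" if t: "t \<in> {0..T}" for k t
  proof -
    have "norm (f k t) \<le> (\<Sum>m<k. t / (\<kappa> * (cmod u) ^ 2) * (1 / (real (Suc m)) ^ 2))"
      unfolding f_def using t norm_g0_\<mu>_le norm_cos_times_le
      by (intro sum_norm_le) (meson atLeastAtMost_iff order_trans)
    also have "\<dots> \<le> t / (\<kappa> * (cmod u) ^ 2) * (\<Sum>m. 1 / (real (Suc m)) ^ 2)"
      unfolding sum_distrib_left[symmetric] using t \<kappa>_pos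
      by (intro mult_left_mono sum_le_suminf[OF summable_inverse_Suc_sq]) auto
    also have "\<dots> \<le> C"
      unfolding C_def using t \<kappa>_pos
      by (intro mult_right_mono divide_right_mono suminf_nonneg[OF summable_inverse_Suc_sq]) auto
    finally show ?thesis .
  qed
  have conv: "(\<lambda>k. f k t) \<longlonglongrightarrow> of_real (cos t) * S t" if "t \<in> {0..T}" for t
    using sums_mult[OF sums_S, of t "of_real (cos t)"] that by (simp add: f_def sums_def)
  have "f k integrable_on {0..T}" for k
    unfolding f_def by (intro integrable_sum integrable_continuous_interval cont) simp
  note dc = dominated_convergence[OF this integrable_continuous_interval[OF continuous_on_const] le conv]
  show "(\<lambda>t. of_real (cos t) * S t) integrable_on {0..T}" by (rule dc(1))
  have "integral {0..T} (f k) = (\<Sum>m<k. integral {0..T} (\<lambda>t. of_real (cos t) * g0 (\<mu> m) t))" for k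
    unfolding f_def by (intro integral_sum integrable_continuous_interval cont) simp
  thus "(\<lambda>m. integral {0..T} (\<lambda>t. of_real (cos t) * g0 (\<mu> m) t)) sums integral {0..T} (\<lambda>t. of_real (cos t) * S t)"
    using dc(2) unfolding sums_def by simp
qed

lemma S_closed_form:
  assumes "t > 0"
  shows "S t = \<omega> / 4 + (\<omega> / 2) / (exp (\<omega> * of_real t) - 1) - 1 / (2 * of_real t)"
proof -
  have "(\<lambda>m. g0 (\<mu> m) t) sums (\<omega> / 4 + (\<omega> / 2) / (exp (\<omega> * of_real t) - 1) - 1 / (2 * of_real t))"
    unfolding g0_\<mu> \<omega>_def by (rule sums_coth_partial_fractions[OF Re_u_pos assms])
  with sums_S[of t] assms show ?thesis by (simp add: sums_unique2)
qed

lemma norm_exp_\<omega>_minus_1_ge: "exp (Re \<omega> * t) - 1 \<le> cmod (exp (\<omega> * of_real t) - 1)"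
  using norm_triangle_ineq2[of "exp (\<omega> * of_real t)" 1] by (simp add: norm_exp_eq_Re)

lemma S_minus_tendsto_0: "((\<lambda>T. S T - \<omega> / 4) \<longlongrightarrow> 0) at_top"
proof -
  have "((\<lambda>T. (cmod \<omega> / 2) / (exp (Re \<omega> * T) - 1)) \<longlongrightarrow> 0) at_top"
    using Re_\<omega>_pos by real_asymp
  moreover have "eventually (\<lambda>T. norm ((\<omega> / 2) / (exp (\<omega> * of_real T) - 1))
      \<le> (cmod \<omega> / 2) / (exp (Re \<omega> * T) - 1)) at_top"
    using eventually_gt_at_top[of 0]
  proof eventually_elim
    case (elim T)
    hence "exp (Re \<omega> * T) > 1" using Re_\<omega>_pos by simp
    have "norm ((\<omega> / 2) / (exp (\<omega> * of_real T) - 1)) = (cmod \<omega> / 2) / cmod (exp (\<omega> * of_real T) - 1)"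
      by (simp only: norm_divide) simp
    also have "\<dots> \<le> (cmod \<omega> / 2) / (exp (Re \<omega> * T) - 1)"
      by (rule frac_le) (use \<open>exp (Re \<omega> * T) > 1\<close> norm_exp_\<omega>_minus_1_ge[of T] in auto)
    finally show ?case .
  qed
  ultimately have "((\<lambda>T. (\<omega> / 2) / (exp (\<omega> * of_real T) - 1)) \<longlongrightarrow> 0) at_top"
    by (rule Lim_null_comparison[rotated])
  moreover have "((\<lambda>T. of_real (1 / (2 * T)) :: complex) \<longlongrightarrow> of_real 0) at_top"
    by (intro tendsto_of_real) real_asymp
  ultimately have "((\<lambda>T. (\<omega> / 2) / (exp (\<omega> * of_real T) - 1) - 1 / (2 * of_real T)) \<longlongrightarrow> 0 - 0) at_top"
    by (intro tendsto_diff) simp_all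
  moreover have "eventually (\<lambda>T. (\<omega> / 2) / (exp (\<omega> * of_real T) - 1) - 1 / (2 * of_real T) = S T - \<omega> / 4) at_top"
    using eventually_gt_at_top[of 0] by eventually_elim (simp add: S_closed_form)
  ultimately show ?thesis by (simp add: Lim_transform_eventually)
qed

definition ibp_tail :: "nat \<Rightarrow> real \<Rightarrow> complex" where
  "ibp_tail m T = of_real (cos T) * g1 (\<mu> m) T - (ibp_remainder (\<mu> m) T - ibp_remainder_limit (\<mu> m))"

lemma norm_ibp_remainder_\<mu>_le:
  assumes "T \<ge> 0"
  shows "norm (ibp_remainder (\<mu> m) T - ibp_remainder_limit (\<mu> m))
           \<le> 3 / (\<kappa> ^ 3 * (cmod u) ^ 2) * (1 / (real (Suc m)) ^ 2)"
proof -
  have "norm (ibp_remainder (\<mu> m) T - ibp_remainder_limit (\<mu> m)) \<le> 3 / \<kappa> ^ 3 * (1 / (T ^ 2 + (cmod (\<mu> m)) ^ 2))"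
    using ibp_remainder_tendsto(2)[OF Re_\<mu>_pos assms] by (simp add: Re_div_norm_\<mu>)
  also have "\<dots> \<le> 3 / \<kappa> ^ 3 * (1 / (cmod u) ^ 2 * (1 / (real (Suc m)) ^ 2))"
    using \<kappa>_pos by (intro mult_left_mono inverse_sq_plus_norm_\<mu>_le) auto
  finally show ?thesis by simp
qed

lemma norm_ibp_tail_le:
  assumes "T \<ge> 0"
  shows "norm (ibp_tail m T) \<le> (1 / (\<kappa> ^ 2 * (cmod u) ^ 2) + 3 / (\<kappa> ^ 3 * (cmod u) ^ 2)) * (1 / (real (Suc m)) ^ 2)"
proof -
  have "cmod (g1 (\<mu> m) T) \<le> 1 / \<kappa> ^ 2 * (1 / (T ^ 2 + (cmod (\<mu> m)) ^ 2))"
    using norm_g1_le[OF Re_\<mu>_pos, of m T] by (simp add: Re_div_norm_\<mu> mult.commute)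
  also have "\<dots> \<le> 1 / \<kappa> ^ 2 * (1 / (cmod u) ^ 2 * (1 / (real (Suc m)) ^ 2))"
    using \<kappa>_pos by (intro mult_left_mono inverse_sq_plus_norm_\<mu>_le) auto
  finally have "norm (of_real (cos T) * g1 (\<mu> m) T) \<le> 1 / (\<kappa> ^ 2 * (cmod u) ^ 2) * (1 / (real (Suc m)) ^ 2)"
    using norm_cos_times_le[of T "g1 (\<mu> m) T"] by simp
  with norm_ibp_remainder_\<mu>_le[OF assms, of m] show ?thesis
    unfolding ibp_tail_def using norm_triangle_ineq4 by (smt (verit) distrib_right)
qed

lemma ibp_tail_tendsto_0: "(ibp_tail m \<longlongrightarrow> 0) at_top"
proof -
  have "((\<lambda>T. g1 (\<mu> m) T) \<longlongrightarrow> 0) at_top"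
  proof (rule Lim_null_comparison)
    show "eventually (\<lambda>T. norm (g1 (\<mu> m) T) \<le> 1 / \<kappa> ^ 2 * (1 / (T ^ 2 + (cmod (\<mu> m)) ^ 2))) at_top"
      using norm_g1_le[OF Re_\<mu>_pos, of m] by (simp add: Re_div_norm_\<mu> mult.commute)
    show "((\<lambda>T. 1 / \<kappa> ^ 2 * (1 / (T ^ 2 + (cmod (\<mu> m)) ^ 2))) \<longlongrightarrow> 0) at_top"
      by (rule tendsto_mult_right_zero[OF tendsto_inverse_sq_plus_const])
  qed
  hence "((\<lambda>T. of_real (cos T) * g1 (\<mu> m) T) \<longlongrightarrow> 0) at_top"
    by (rule Lim_null_comparison[rotated, OF tendsto_norm_zero]) (simp add: norm_cos_times_le)
  moreover have "((\<lambda>T. ibp_remainder (\<mu> m) T - ibp_remainder_limit (\<mu> m)) \<longlongrightarrow> 0) at_top"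
    using ibp_remainder_tendsto(1)[OF Re_\<mu>_pos] by (simp add: LIM_zero_iff)
  ultimately show ?thesis
    unfolding ibp_tail_def by (rule tendsto_diff[where b = 0, simplified])
qed

lemma norm_F_le: "norm (F m) \<le> (1 / (cmod u) ^ 2 + 3 / (\<kappa> ^ 3 * (cmod u) ^ 2)) * (1 / (real (Suc m)) ^ 2)"
proof -
  have "norm (1 / (\<mu> m) ^ 2) = 1 / (cmod u) ^ 2 * (1 / (real (Suc m)) ^ 2)"
    by (simp add: norm_divide norm_power norm_\<mu> power_mult_distrib del: of_nat_Suc)
  moreover have "norm (ibp_remainder_limit (\<mu> m)) \<le> 3 / (\<kappa> ^ 3 * (cmod u) ^ 2) * (1 / (real (Suc m)) ^ 2)"
    using norm_ibp_remainder_\<mu>_le[of 0 m] by (simp add: ibp_remainder_def)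
  ultimately show ?thesis
    unfolding F_def using norm_triangle_ineq4[of "- 1 / (\<mu> m) ^ 2" "ibp_remainder_limit (\<mu> m)"]
    by (simp add: norm_divide algebra_simps)
qed

lemma sums_F: "F sums \<Phi>"
  unfolding \<Phi>_def by (rule summable_sums, rule summable_if_norm_le_inverse_Suc_sq[OF norm_F_le])

lemma integral_cos_S_minus_\<Phi>:
  assumes T: "T \<ge> 0"
  shows "integral {0..T} (\<lambda>t. of_real (cos t) * S t) - \<Phi> = of_real (sin T) * S T + (\<Sum>m. ibp_tail m T)"
proof -
  have "integral {0..T} (\<lambda>t. of_real (cos t) * g0 (\<mu> m) t) - F m = of_real (sin T) * g0 (\<mu> m) T + ibp_tail m T" for m
    by (simp add: integral_cos_g0[OF Re_\<mu>_pos T] F_def ibp_boundary_def ibp_tail_def)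
  hence "(\<lambda>m. of_real (sin T) * g0 (\<mu> m) T + ibp_tail m T) sums (integral {0..T} (\<lambda>t. of_real (cos t) * S t) - \<Phi>)"
    using sums_diff[OF integral_cos_S(2)[OF T] sums_F] by simp
  moreover have "(\<lambda>m. of_real (sin T) * g0 (\<mu> m) T + ibp_tail m T) sums (of_real (sin T) * S T + (\<Sum>m. ibp_tail m T))"
    by (intro sums_add sums_mult sums_S T summable_sums summable_if_norm_le_inverse_Suc_sq[OF norm_ibp_tail_le[OF T]])
  ultimately show ?thesis by (rule sums_unique2)
qed

lemma has_integral_cos_S_minus:
  assumes T: "T \<ge> 0"
  shows "((\<lambda>t. of_real (cos t) * (S t - \<omega> / 4)) has_integral
           integral {0..T} (\<lambda>t. of_real (cos t) * S t) - \<omega> / 4 * of_real (sin T)) {0..T}"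
  using has_integral_diff[OF integrable_integral[OF integral_cos_S(1)[OF T]]
                             has_integral_mult_right[OF has_integral_cos[OF T], of "\<omega> / 4"]]
  by (simp add: algebra_simps)

lemma tendsto_integral_cos_S_minus:
  "((\<lambda>T. integral {0..T} (\<lambda>t. of_real (cos t) * (S t - \<omega> / 4))) \<longlongrightarrow> \<Phi>) at_top"
proof -
  have "((\<lambda>T. of_real (sin T) * (S T - \<omega> / 4)) \<longlongrightarrow> 0) at_top"
    by (rule Lim_null_comparison[OF _ tendsto_norm_zero[OF S_minus_tendsto_0]]) (simp add: norm_sin_times_le)
  moreover have "((\<lambda>T. \<Sum>m. ibp_tail m T) \<longlongrightarrow> 0) at_top"
    by (rule tendsto_suminf_zero_if_dominated[OF ibp_tail_tendsto_0 norm_ibp_tail_le])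
  ultimately have "((\<lambda>T. \<Phi> + (of_real (sin T) * (S T - \<omega> / 4) + (\<Sum>m. ibp_tail m T))) \<longlongrightarrow> \<Phi> + (0 + 0)) at_top"
    by (intro tendsto_add tendsto_const)
  moreover have "eventually (\<lambda>T. \<Phi> + (of_real (sin T) * (S T - \<omega> / 4) + (\<Sum>m. ibp_tail m T))
      = integral {0..T} (\<lambda>t. of_real (cos t) * (S t - \<omega> / 4))) at_top"
    using eventually_ge_at_top[of 0]
  proof eventually_elim
    case (elim T)
    with integral_unique[OF has_integral_cos_S_minus[OF elim]] integral_cos_S_minus_\<Phi>[OF elim]
    show ?case by (simp add: algebra_simps)
  qed
  ultimately show ?thesis by (simp add: Lim_transform_eventually)
qed

section \<open>Evaluation of the sum\<close>

lemma bounded_S_minus: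
  obtains C where "\<And>t. t \<ge> 0 \<Longrightarrow> cmod (S t - \<omega> / 4) \<le> C"
proof
  define C0 where "C0 = 1 / (\<kappa> * (cmod u) ^ 2) * (\<Sum>m. 1 / (real (Suc m)) ^ 2)"
  define C1 where "C1 = (cmod \<omega> / 2) / (exp (Re \<omega>) - 1) + 1 / 2"
  have e: "exp (Re \<omega>) > 1" using Re_\<omega>_pos by simp
  have C0: "C0 \<ge> 0" using \<kappa>_pos suminf_nonneg[OF summable_inverse_Suc_sq] by (simp add: C0_def)
  have C1: "C1 \<ge> 0" using e by (simp add: C1_def)
  fix t :: real assume t: "t \<ge> 0"
  show "cmod (S t - \<omega> / 4) \<le> C0 + cmod \<omega> / 4 + C1"
  proof (cases "t \<le> 1")
    case True
    have "cmod (S t) \<le> t * C0"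
      using norm_S_le[OF t] by (simp add: C0_def)
    also have "\<dots> \<le> C0" using True C0 by (simp add: mult_left_le_one_le t)
    finally show ?thesis
      using norm_triangle_ineq4[of "S t" "\<omega> / 4"] C1 by (simp add: norm_divide)
  next
    case False
    have "exp (Re \<omega>) - 1 \<le> exp (Re \<omega> * t) - 1"
      using False Re_\<omega>_pos by simp
    also have "\<dots> \<le> cmod (exp (\<omega> * of_real t) - 1)" by (rule norm_exp_\<omega>_minus_1_ge)
    finally have "cmod ((\<omega> / 2) / (exp (\<omega> * of_real t) - 1)) \<le> (cmod \<omega> / 2) / (exp (Re \<omega>) - 1)"
      using e by (simp only: norm_divide) (auto intro!: frac_le)
    moreover have "cmod (1 / (2 * of_real t)) \<le> 1 / 2"
      using False by (simp add: norm_divide)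
    ultimately have "cmod (S t - \<omega> / 4) \<le> C1"
      using False norm_triangle_ineq4[of "(\<omega> / 2) / (exp (\<omega> * of_real t) - 1)" "1 / (2 * of_real t)"]
      by (simp add: S_closed_form C1_def)
    thus ?thesis using C0 norm_ge_zero[of \<omega>] by linarith
  qed
qed

lemma S_minus_truncated_expansion:
  assumes t: "t \<ge> 0"
  shows "S t - \<omega> / 4 = (\<omega> / 2) * (\<Sum>n=1..K. exp (- (of_nat n * \<omega> * of_real t)))
      + exp (- (of_nat K * \<omega> * of_real t)) * (S t - \<omega> / 4) - one_minus_exp_quot (of_nat K * \<omega>) t / 2"
proof (cases "t = 0")
  case True
  thus ?thesis by (simp add: S_def g0_def one_minus_exp_quot_0 algebra_simps)
next
  case False
  with t have "Re (\<omega> * of_real t) > 0" using Re_\<omega>_pos by simp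
  hence E: "exp (\<omega> * of_real t) \<noteq> 1"
    using norm_exp_eq_Re[of "\<omega> * of_real t"] by (metis exp_gt_one norm_one less_irrefl)
  have closed: "S t - \<omega> / 4 = (\<omega> / 2) / (exp (\<omega> * of_real t) - 1) - 1 / (2 * of_real t)"
    using S_closed_form False t by simp
  have geometric: "(\<Sum>n=1..K. exp (- (of_nat n * \<omega> * of_real t)))
      = (1 - exp (- (of_nat K * \<omega> * of_real t))) / (exp (\<omega> * of_real t) - 1)"
    using sum_exp_neg_geometric[OF E, of K] by (simp add: mult.assoc)
  have quot: "one_minus_exp_quot (of_nat K * \<omega>) t = (1 - exp (- (of_nat K * \<omega> * of_real t))) / of_real t"
    using one_minus_exp_quot_eq[OF False] by simp
  have alg: "(w / 2) / D - 1 / (2 * x)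
      = (w / 2) * ((1 - Q) / D) + Q * ((w / 2) / D - 1 / (2 * x)) - ((1 - Q) / x) / 2"
    if "D \<noteq> 0" "x \<noteq> 0" for w D Q x :: complex
    using that by (simp add: field_simps)
  show ?thesis
    unfolding closed geometric quot by (rule alg) (use E False in simp_all)
qed

definition \<Phi>_approx :: "nat \<Rightarrow> complex" where
  "\<Phi>_approx K = (\<omega> / 2) * (\<Sum>n=1..K. of_nat n * \<omega> / (1 + (of_nat n * \<omega>) ^ 2)) - Ln (1 + (of_nat K * \<omega>) ^ 2) / 4"

lemma norm_\<Phi>_minus_approx_le:
  assumes C: "\<And>t. t \<ge> 0 \<Longrightarrow> cmod (S t - \<omega> / 4) \<le> C" and K: "K \<ge> 1"
  shows "norm (\<Phi> - \<Phi>_approx K) \<le> C / (real K * Re \<omega>)"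
proof -
  define \<alpha> where "\<alpha> = of_nat K * \<omega>"
  define I where "I T = integral {0..T} (\<lambda>t. of_real (cos t) * (S t - \<omega> / 4))" for T
  define P where "P T = (\<Sum>n=1..K. cos_exp_primitive (of_nat n * \<omega>) T - cos_exp_primitive (of_nat n * \<omega>) 0)" for T
  define J where "J T = integral {0..T} (\<lambda>t. of_real (cos t) * one_minus_exp_quot \<alpha> t)" for T
  have a: "Re \<alpha> > 0" and r: "real K * Re \<omega> > 0" using K Re_\<omega>_pos by (simp_all add: \<alpha>_def)
  have Re_n\<omega>: "Re (of_nat n * \<omega>) > 0" if "n \<in> {1..K}" for n
    using that Re_\<omega>_pos by simp
  have bound: "norm (I T - (\<omega> / 2) * P T + J T / 2) \<le> C / (real K * Re \<omega>)" if T: "T \<ge> 0" for T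
  proof -
    define f where "f t = of_real (cos t) * (exp (- (of_nat K * \<omega> * of_real t)) * (S t - \<omega> / 4))" for t
    have "((\<lambda>t. of_real (cos t) * (S t - \<omega> / 4)) has_integral I T) {0..T}"
      unfolding I_def by (rule integrable_integral[OF has_integral_integrable[OF has_integral_cos_S_minus[OF T]]])
    moreover have "((\<lambda>t. \<Sum>n=1..K. of_real (cos t) * exp (- (of_nat n * \<omega> * of_real t))) has_integral P T) {0..T}"
      unfolding P_def using Re_n\<omega> one_plus_sq_nonzero[of _ 1]
      by (intro has_integral_sum has_integral_cos_exp T) auto
    moreover have "((\<lambda>t. of_real (cos t) * one_minus_exp_quot \<alpha> t) has_integral J T) {0..T}"
      unfolding J_def
      by (intro integrable_integral integrable_continuous_interval continuous_intros continuous_on_one_minus_exp_quot)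
    ultimately have "((\<lambda>t. of_real (cos t) * (S t - \<omega> / 4)
          - (\<omega> / 2) * (\<Sum>n=1..K. of_real (cos t) * exp (- (of_nat n * \<omega> * of_real t)))
          + of_real (cos t) * one_minus_exp_quot \<alpha> t / 2) has_integral I T - (\<omega> / 2) * P T + J T / 2) {0..T}"
      by (intro has_integral_add has_integral_diff has_integral_mult_right has_integral_divide)
    hence "(f has_integral I T - (\<omega> / 2) * P T + J T / 2) {0..T}"
    proof (rule has_integral_eq[rotated])
      fix t :: real assume "t \<in> {0..T}"
      hence "of_real (cos t) * (S t - \<omega> / 4) = of_real (cos t) * ((\<omega> / 2) * (\<Sum>n=1..K. exp (- (of_nat n * \<omega> * of_real t)))
          + exp (- (of_nat K * \<omega> * of_real t)) * (S t - \<omega> / 4) - one_minus_exp_quot (of_nat K * \<omega>) t / 2)"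
        using S_minus_truncated_expansion[of t K] by simp
      thus "of_real (cos t) * (S t - \<omega> / 4)
          - (\<omega> / 2) * (\<Sum>n=1..K. of_real (cos t) * exp (- (of_nat n * \<omega> * of_real t)))
          + of_real (cos t) * one_minus_exp_quot \<alpha> t / 2 = f t"
        by (simp add: f_def \<alpha>_def algebra_simps sum_distrib_left)
    qed
    hence "norm (I T - (\<omega> / 2) * P T + J T / 2) = norm (integral {0..T} f)"
      by (simp add: integral_unique)
    also have "\<dots> \<le> integral {0..T} (\<lambda>t. C * exp (- ((real K * Re \<omega>) * t)))"
    proof (rule integral_norm_bound_integral)
      show "f integrable_on {0..T}" using \<open>(f has_integral _) _\<close> by blast
      show "(\<lambda>t. C * exp (- ((real K * Re \<omega>) * t))) integrable_on {0..T}"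
        by (intro integrable_continuous_interval continuous_intros)
      fix t assume "t \<in> {0..T}"
      hence "cmod (S t - \<omega> / 4) \<le> C" using C by simp
      hence "norm (exp (- (of_nat K * \<omega> * of_real t)) * (S t - \<omega> / 4)) \<le> C * exp (- ((real K * Re \<omega>) * t))"
        by (simp add: norm_mult norm_exp_eq_Re mult.commute mult_left_mono)
      thus "norm (f t) \<le> C * exp (- ((real K * Re \<omega>) * t))"
        unfolding f_def using norm_cos_times_le order_trans by blast
    qed
    also have "\<dots> = C * integral {0..T} (\<lambda>t. exp (- ((real K * Re \<omega>) * t)))"
      by simp
    also have "\<dots> \<le> C * (1 / (real K * Re \<omega>))"
      using integral_exp_neg_le[OF r T] C[of 0] norm_ge_zero[of "S 0 - \<omega> / 4"]
      by (intro mult_left_mono) linarith+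
    finally show ?thesis by simp
  qed
  have "((\<lambda>T. I T - (\<omega> / 2) * P T + J T / 2) \<longlongrightarrow>
      \<Phi> - (\<omega> / 2) * (\<Sum>n=1..K. 0 - cos_exp_primitive (of_nat n * \<omega>) 0) + (Ln (1 + \<alpha> ^ 2) / 2) / 2) at_top"
    unfolding I_def P_def J_def
    by (intro tendsto_add tendsto_diff tendsto_mult tendsto_divide tendsto_sum tendsto_const
          tendsto_integral_cos_S_minus cos_exp_primitive_tendsto_0 Re_n\<omega> tendsto_integral_cos_one_minus_exp_quot a)
       auto
  moreover have "eventually (\<lambda>T. norm (I T - (\<omega> / 2) * P T + J T / 2) \<le> C / (real K * Re \<omega>)) at_top"
    using eventually_ge_at_top[of 0] by eventually_elim (rule bound)
  ultimately have "norm (\<Phi> - (\<omega> / 2) * (\<Sum>n=1..K. 0 - cos_exp_primitive (of_nat n * \<omega>) 0) + (Ln (1 + \<alpha> ^ 2) / 2) / 2)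
      \<le> C / (real K * Re \<omega>)"
    by (intro Lim_norm_ubound) simp_all
  thus ?thesis
    by (simp add: \<Phi>_approx_def \<alpha>_def cos_exp_primitive_def algebra_simps)
qed

definition \<beta> :: complex where
  "\<beta> = u / (2 * of_real pi)"

lemma \<omega>_eq_inverse_\<beta>: "\<omega> = inverse \<beta>"
  by (simp add: \<omega>_def \<beta>_def)

lemma Re_\<beta>_pos: "Re \<beta> > 0"
  using Re_u_pos by (simp add: \<beta>_def)

lemma i\<beta>_plus_nonzero: "\<i> * \<beta> + of_nat n \<noteq> 0" "- (\<i> * \<beta>) + of_nat n \<noteq> 0"
  using Re_\<beta>_pos by (auto simp: complex_eq_iff)

lemma \<omega>_term_partial_fractions:
  "(\<omega> / 2) * (of_nat n * \<omega> / (1 + (of_nat n * \<omega>) ^ 2))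
     = (inverse (\<i> * \<beta> + of_nat n) + inverse (- (\<i> * \<beta>) + of_nat n)) / 4"
proof -
  have prod: "(\<i> * \<beta> + of_nat n) * (- (\<i> * \<beta>) + of_nat n) = \<beta> ^ 2 + (of_nat n) ^ 2"
    by (simp add: algebra_simps power2_eq_square)
  hence nz: "\<beta> ^ 2 + (of_nat n) ^ 2 \<noteq> 0" using i\<beta>_plus_nonzero by (metis mult_eq_0_iff)
  have \<beta>0: "\<beta> \<noteq> 0" using Re_\<beta>_pos by auto
  have half_quarter: "x / (2 * D) = (2 * x / D) / 4" for x D :: complex
    by (simp add: field_simps)
  have "(\<omega> / 2) * (of_nat n * \<omega> / (1 + (of_nat n * \<omega>) ^ 2)) = of_nat n / (2 * (\<beta> ^ 2 + (of_nat n) ^ 2))"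
    using \<beta>0 nz by (simp add: \<omega>_eq_inverse_\<beta> field_simps power2_eq_square)
  also have "\<dots> = (2 * of_nat n / (\<beta> ^ 2 + (of_nat n) ^ 2)) / 4"
    by (rule half_quarter)
  also have "2 * of_nat n / (\<beta> ^ 2 + (of_nat n) ^ 2) = inverse (\<i> * \<beta> + of_nat n) + inverse (- (\<i> * \<beta>) + of_nat n)"
    unfolding prod[symmetric] using i\<beta>_plus_nonzero[of n] by (simp add: field_simps)
  finally show ?thesis .
qed

lemma \<Phi>_approx_eq_Digamma_approx:
  "\<Phi>_approx K = (2 * of_real (ln (real (Suc K))) - Ln (1 + (of_nat K * \<omega>) ^ 2)) / 4
     - (Digamma_approx (\<i> * \<beta>) (Suc K) + Digamma_approx (- (\<i> * \<beta>)) (Suc K)) / 4"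
proof -
  have "(\<Sum>n<Suc K. inverse (\<i> * \<beta> + of_nat n)) + (\<Sum>n<Suc K. inverse (- (\<i> * \<beta>) + of_nat n))
      = (\<Sum>n=1..K. inverse (\<i> * \<beta> + of_nat n) + inverse (- (\<i> * \<beta>) + of_nat n))"
  proof -
    define h where "h n = inverse (\<i> * \<beta> + of_nat n) + inverse (- (\<i> * \<beta>) + of_nat n)" for n :: nat
    have "(\<Sum>n<Suc K. inverse (\<i> * \<beta> + of_nat n)) + (\<Sum>n<Suc K. inverse (- (\<i> * \<beta>) + of_nat n))
        = (\<Sum>n<Suc K. h n)"
      unfolding h_def by (rule sum.distrib[symmetric])
    also have "\<dots> = h 0 + (\<Sum>n<K. h (Suc n))" by (rule sum.lessThan_Suc_shift)
    also have "\<dots> = (\<Sum>n<K. h (Suc n))" by (simp add: h_def)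
    also have "\<dots> = (\<Sum>n=Suc 0..K. h n)" by (rule sum.atLeast1_atMost_eq[symmetric])
    finally show ?thesis by (simp only: h_def One_nat_def)
  qed
  thus ?thesis
    unfolding \<Phi>_approx_def Digamma_approx_def sum_distrib_left \<omega>_term_partial_fractions
    by (simp add: sum_divide_distrib[symmetric] field_simps)
qed

lemma Ln_\<omega>_sq: "Ln (\<omega> ^ 2) = - 2 * Ln \<beta>"
proof -
  have "\<omega> \<noteq> 0" using Re_\<omega>_pos by auto
  moreover have "\<bar>Im (Ln \<omega>)\<bar> < pi / 2" by (rule Re_Ln_pos_lt_imp[OF Re_\<omega>_pos])
  ultimately have "Ln (\<omega> * \<omega>) = Ln \<omega> + Ln \<omega>"
    by (intro Ln_times_simple) auto
  moreover have "Ln \<omega> = - Ln \<beta>"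
    unfolding \<omega>_eq_inverse_\<beta> by (rule Ln_inverse) (use Re_\<beta>_pos in \<open>auto simp: complex_nonpos_Reals_iff\<close>)
  ultimately show ?thesis by (simp add: power2_eq_square)
qed

lemma tendsto_ln_minus_Ln: "(\<lambda>K. 2 * of_real (ln (real (Suc K))) - Ln (1 + (of_nat K * \<omega>) ^ 2)) \<longlonglongrightarrow> 2 * Ln \<beta>"
proof -
  have "(\<lambda>K. ln (real (Suc K)) - ln (real K)) \<longlonglongrightarrow> 0" by real_asymp
  moreover have "(\<lambda>K. 1 / (real K) ^ 2) \<longlonglongrightarrow> 0" by real_asymp
  hence "(\<lambda>K. Ln (of_real (1 / (real K) ^ 2) + \<omega> ^ 2)) \<longlonglongrightarrow> Ln (of_real 0 + \<omega> ^ 2)"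
    using sq_not_nonpos_Reals[OF Re_\<omega>_pos] by (intro tendsto_Ln tendsto_add tendsto_of_real tendsto_const) auto
  ultimately have "(\<lambda>K. 2 * of_real (ln (real (Suc K)) - ln (real K)) - Ln (of_real (1 / (real K) ^ 2) + \<omega> ^ 2))
      \<longlonglongrightarrow> 2 * of_real 0 - Ln (\<omega> ^ 2)"
    by (intro tendsto_diff tendsto_mult tendsto_const tendsto_of_real) simp_all
  moreover have "eventually (\<lambda>K. 2 * of_real (ln (real (Suc K)) - ln (real K)) - Ln (of_real (1 / (real K) ^ 2) + \<omega> ^ 2)
      = 2 * of_real (ln (real (Suc K))) - Ln (1 + (of_nat K * \<omega>) ^ 2)) sequentially"
    using eventually_ge_at_top[of 1]
  proof eventually_elim
    case (elim K)
    hence K: "real K ^ 2 > 0" by simp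
    have "of_real (1 / (real K) ^ 2) + \<omega> ^ 2 \<notin> \<real>\<^sub>\<le>\<^sub>0"
    proof
      assume "of_real (1 / (real K) ^ 2) + \<omega> ^ 2 \<in> \<real>\<^sub>\<le>\<^sub>0"
      hence "Im (\<omega> ^ 2) = 0" "1 / (real K) ^ 2 + Re (\<omega> ^ 2) \<le> 0"
        by (auto simp: complex_nonpos_Reals_iff)
      moreover have "0 < 1 / (real K) ^ 2" using K by simp
      ultimately have "Im (\<omega> ^ 2) = 0" "Re (\<omega> ^ 2) \<le> 0" by linarith+
      hence "\<omega> ^ 2 \<in> \<real>\<^sub>\<le>\<^sub>0" by (simp add: complex_nonpos_Reals_iff)
      with sq_not_nonpos_Reals[OF Re_\<omega>_pos] show False ..
    qed
    hence "of_real (1 / (real K) ^ 2) + \<omega> ^ 2 \<noteq> 0" by auto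
    moreover have "1 + (of_nat K * \<omega>) ^ 2 = of_real (real K ^ 2) * (of_real (1 / (real K) ^ 2) + \<omega> ^ 2)"
      using K by (simp add: field_simps power_mult_distrib)
    ultimately have "Ln (1 + (of_nat K * \<omega>) ^ 2) = Ln (of_real (real K ^ 2)) + Ln (of_real (1 / (real K) ^ 2) + \<omega> ^ 2)"
      using Ln_times_of_real[OF K] by simp
    also have "Ln (of_real (real K ^ 2)) = of_real (2 * ln (real K))"
      by (subst Ln_of_real[OF K]) (simp add: ln_realpow)
    finally have "Ln (1 + (of_nat K * \<omega>) ^ 2) = of_real (2 * ln (real K)) + Ln (of_real (1 / (real K) ^ 2) + \<omega> ^ 2)" .
    thus ?case by (simp add: algebra_simps)
  qed
  ultimately show ?thesis by (simp add: Lim_transform_eventually Ln_\<omega>_sq)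
qed

lemma \<Phi>_approx_tendsto:
  "\<Phi>_approx \<longlonglongrightarrow> Ln \<beta> / 2 - (Digamma (\<i> * \<beta>) + Digamma (- (\<i> * \<beta>))) / 4"
proof -
  have "\<i> * \<beta> \<noteq> 0" using Re_\<beta>_pos by auto
  hence "(\<lambda>K. Digamma_approx z (Suc K)) \<longlonglongrightarrow> Digamma z" if "z \<in> {\<i> * \<beta>, - (\<i> * \<beta>)}" for z
    using that by (auto intro!: LIMSEQ_Suc Digamma_approx_LIMSEQ)
  hence "(\<lambda>K. (2 * of_real (ln (real (Suc K))) - Ln (1 + (of_nat K * \<omega>) ^ 2)) / 4
     - (Digamma_approx (\<i> * \<beta>) (Suc K) + Digamma_approx (- (\<i> * \<beta>)) (Suc K)) / 4)
      \<longlonglongrightarrow> (2 * Ln \<beta>) / 4 - (Digamma (\<i> * \<beta>) + Digamma (- (\<i> * \<beta>))) / 4"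
    by (intro tendsto_diff tendsto_divide tendsto_add tendsto_ln_minus_Ln tendsto_const) auto
  thus ?thesis
    unfolding \<Phi>_approx_eq_Digamma_approx[abs_def] by simp
qed

lemma \<Phi>_eq: "\<Phi> = Ln \<beta> / 2 - (Digamma (\<i> * \<beta>) + Digamma (- (\<i> * \<beta>))) / 4"
proof -
  obtain C where C: "\<And>t. t \<ge> 0 \<Longrightarrow> cmod (S t - \<omega> / 4) \<le> C"
    using bounded_S_minus by blast
  have "(\<lambda>K. \<Phi> - \<Phi>_approx K) \<longlonglongrightarrow> 0"
  proof (rule Lim_null_comparison)
    show "eventually (\<lambda>K. norm (\<Phi> - \<Phi>_approx K) \<le> C / Re \<omega> * (1 / real K)) sequentially"
      using eventually_ge_at_top[of 1]
      by eventually_elim (use norm_\<Phi>_minus_approx_le[OF C] in \<open>simp add: field_simps\<close>)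
    show "(\<lambda>K. C / Re \<omega> * (1 / real K)) \<longlonglongrightarrow> 0"
      by (rule tendsto_mult_right_zero[OF lim_1_over_n])
  qed
  hence "\<Phi>_approx \<longlonglongrightarrow> \<Phi>"
    using tendsto_diff[OF tendsto_const[of \<Phi>]] by (fastforce simp: LIM_zero_iff)
  thus ?thesis using \<Phi>_approx_tendsto by (rule LIMSEQ_unique)
qed

end

theorem theorem1p2:
  fixes u :: complex
  assumes "Re u > 0"
  shows "(\<forall>m::nat. m \<ge> 1 \<longrightarrow>
            improper_integral_converges
              (\<lambda>t. of_real t * of_real (cos t) / (of_real t ^ 2 + of_nat m ^ 2 * u ^ 2)))
     \<and> (\<lambda>m::nat. improper_integral
              (\<lambda>t. of_real t * of_real (cos t) / (of_real t ^ 2 + of_nat (Suc m) ^ 2 * u ^ 2)))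
         sums ((1/2) * (Ln (u / (2 * of_real pi))
                 - (1/2) * (Digamma (\<i> * u / (2 * of_real pi)) + Digamma (- \<i> * u / (2 * of_real pi)))))"
proof -
  interpret cos_kernel_sum u by unfold_locales (rule assms)
  have integrand: "(\<lambda>t. of_real t * of_real (cos t) / (of_real t ^ 2 + of_nat (Suc m) ^ 2 * u ^ 2))
      = (\<lambda>t. of_real (cos t) * g0 (\<mu> m) t)" for m
    by (simp add: g0_\<mu> mult.commute)
  have convergent: "improper_integral_converges (\<lambda>t. of_real t * of_real (cos t) / (of_real t ^ 2 + of_nat m ^ 2 * u ^ 2))"
    if "m \<ge> 1" for m
  proof -
    from that obtain k where "m = Suc k" by (cases m) auto
    thus ?thesis using improper_integral_cos_g0(1)[OF Re_\<mu>_pos, of k] by (simp only: integrand)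
  qed
  have integrals: "(\<lambda>m. improper_integral (\<lambda>t. of_real (cos t) * g0 (\<mu> m) t)) = F"
    by (simp add: fun_eq_iff improper_integral_cos_g0(2)[OF Re_\<mu>_pos] F_def)
  have \<Phi>_value: "\<Phi> = (1/2) * (Ln (u / (2 * of_real pi))
      - (1/2) * (Digamma (\<i> * u / (2 * of_real pi)) + Digamma (- \<i> * u / (2 * of_real pi))))"
    by (simp add: \<Phi>_eq \<beta>_def algebra_simps)
  show ?thesis
    using convergent sums_F unfolding integrand integrals \<Phi>_value by blast
qed

end
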